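(* In the setting described in the context, suppose that Assumption A holds for $u$ and the sample pair $\{\boldsymbol v_i\}_{i=1}^N$, $\{z_i\}_{i=1}^N$. Then the function $$\tilde\varphi_N(w):=\frac1N\sum_{i=1}^N\max\{0,F_{\chi_K}(\tilde\rho_{\mathrm{out}}(w,\boldsymbol v_i,z_i))-F_{\chi_K}(\tilde\rho_{\mathrm{in}}(w,\boldsymbol v_i,z_i))\}$$ is differentiable at $w=u$, and $$\begin{aligned}\nabla\tilde\varphi_N(u)=\frac1N\sum_{i=1}^N\Bigg(&-\frac{f_{\chi_K}(\tilde\rho^{(i)}_{\mathrm{out}})}{\langle\nabla_z g_{j_{2,i}}(u,\tilde\xi_i+\tilde\rho^{(i)}_{\mathrm{out}}L_K\boldsymbol v_i),L_K\boldsymbol v_i\rangle}\nabla_u g_{j_{2,i}}(u,\tilde\xi_i+\tilde\rho^{(i)}_{\mathrm{out}}L_K\boldsymbol v_i)\\&+\mathbf 1_{\{\tilde\rho^{(i)}_{\mathrm{in}}>0\}}\frac{f_{\chi_K}(\tilde\rho^{(i)}_{\mathrm{in}})}{\langle\nabla_z g_{j_{1,i}}(u,\tilde\xi_i+\tilde\rho^{(i)}_{\mathrm{in}}L_K\boldsymbol v_i),L_K\boldsymbol v_i\rangle}\nabla_u g_{j_{1,i}}(u,\tilde\xi_i+\tilde\rho^{(i)}_{\mathrm{in}}L_K\boldsymbol v_i)\Bigg)H_i,\end{aligned}$$ where $H_i=1$ if $\tilde\rho^{(i)}_{\mathrm{out}}>\tilde\rho^{(i)}_{\mathrm{in}}$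 and $H_i=0$ otherwise, and any term whose distance $\tilde\rho^{(i)}_{\mathrm{out}}$ or $\tilde\rho^{(i)}_{\mathrm{in}}$ equals $+\infty$ (or whose index set is empty) is interpreted as $0$ (consistent with $f_{\chi_K}(+\infty)=0$).
   Context: Let $\mathscr H$ be a separable real Hilbert space with an orthonormal system $(\phi_k)_{k\ge1}$, $K\ge1$ an integer, and $L_K:\mathbb R^K\to\mathscr H$, $L_K\boldsymbol x=\sum_{k=1}^K x_k\phi_k$. Let $U$ be an open subset of a real Hilbert space (the parameter space), $\bar\xi\in\mathscr H$, and $g_1,\dots,g_M:U\times\mathscr H\to\mathbb R$ continuously differentiable functions such that for each $w\in U$ the map $g_j(w,\cdot)$ is affine; $\nabla_u g_j$ and $\nabla_z g_j$ denote gradients with respect to the first and second argument. Fix $u\in U$ with $g_j(u,\bar\xi)<0$ for all $j=1,\dots,M$. Let $\boldsymbol v_1,\dots,\boldsymbol v_N\in\mathbb S^{K-1}$, $z_1,\dots,z_N\in\mathscr H$, and $\tilde\xi_i:=\bar\xi+z_i$. For $w\in U$, $\boldsymbol v\in\mathbb S^{K-1}$, $z\in\mathscr H$ and each $j$, define (conventions $\inf\varnothing=+\infty$, $\sup\varnothing=0$ over subsets of $[0,\infty)$) $\rho_{j,\mathrm{in}}(w,\boldsymbol v,z):=\inf\{r\ge0:g_j(w,\bar\xi+z+rL_K\boldsymbol v)\le0\}$ and $\rho_{j,\mathrm{out}}(w,\boldsymbol v,z):=\sup\{r\ge0:g_j(w,\bar\xi+z+rL_K\boldsymbol v)\le0\}$.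 For the $i$-th sample let $J_{\mathrm i}:=\{j:g_j(u,\bar\xi+z_i)<0\}$, $J_{\mathrm o}:=\{j:g_j(u,\bar\xi+z_i)>0\}$, and $\tilde\rho_{\mathrm{in}}(w,\boldsymbol v_i,z_i):=\max_{j\in J_{\mathrm o}}\rho_{j,\mathrm{in}}(w,\boldsymbol v_i,z_i)$ ($=0$ if $J_{\mathrm o}=\varnothing$), $\tilde\rho_{\mathrm{out}}(w,\boldsymbol v_i,z_i):=\min_{j\in J_{\mathrm i}}\rho_{j,\mathrm{out}}(w,\boldsymbol v_i,z_i)$ ($=+\infty$ if $J_{\mathrm i}=\varnothing$). Write $\tilde\rho^{(i)}_{\mathrm{in}}:=\tilde\rho_{\mathrm{in}}(u,\boldsymbol v_i,z_i)$, $\tilde\rho^{(i)}_{\mathrm{out}}:=\tilde\rho_{\mathrm{out}}(u,\boldsymbol v_i,z_i)$. Assumption A: for all $i=1,\dots,N$: (1) $J_{\mathrm i}\cup J_{\mathrm o}=\{1,\dots,M\}$; (2) $\tilde\rho^{(i)}_{\mathrm{in}}\ne\tilde\rho^{(i)}_{\mathrm{out}}$ whenever at least one of them is finite; (3) if $0<\tilde\rho^{(i)}_{\mathrm{in}}<\infty$, there is exactly one $j\in J_{\mathrm o}$ with $\rho_{j,\mathrm{in}}(u,\boldsymbol v_i,z_i)=\tilde\rho^{(i)}_{\mathrm{in}}$, denoted $j_{1,i}$; and if $\tilde\rho^{(i)}_{\mathrm{out}}<\infty$, there is exactly one $j\in J_{\mathrm i}$ with $\rho_{j,\mathrm{out}}(u,\boldsymbol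 v_i,z_i)=\tilde\rho^{(i)}_{\mathrm{out}}$, denoted $j_{2,i}$. $F_{\chi_K}$ and $f_{\chi_K}$ denote the CDF and density of the Chi distribution with $K$ degrees of freedom, with $F_{\chi_K}(+\infty)=1$, $f_{\chi_K}(+\infty)=0$. *)

theory Defs
  imports "HOL-Analysis.Analysis" "HOL-Library.Extended_Real"
begin

definition chi_pdf :: "nat \<Rightarrow> real \<Rightarrow> real" where
  "chi_pdf K r = (if r < 0 then 0 else
     r ^ (K - 1) * exp (- (r\<^sup>2) / 2) / (2 powr (real K / 2 - 1) * Gamma (real K / 2)))"

definition chi_cdf :: "nat \<Rightarrow> real \<Rightarrow> real" where
  "chi_cdf K r = (if r \<le> 0 then 0 else integral {0..r} (chi_pdf K))"

definition chi_cdf_e :: "nat \<Rightarrow> ereal \<Rightarrow> real" where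
  "chi_cdf_e K r = (if r = \<infinity> then 1 else if r = - \<infinity> then 0 else chi_cdf K (real_of_ereal r))"

definition chi_pdf_e :: "nat \<Rightarrow> ereal \<Rightarrow> real" where
  "chi_pdf_e K r = (if r = \<infinity> \<or> r = - \<infinity> then 0 else chi_pdf K (real_of_ereal r))"

text \<open>Vectors of R^K are represented as functions nat => real; only coordinates 1..K matter.\<close>
definition LK :: "(nat \<Rightarrow> 'h::real_vector) \<Rightarrow> nat \<Rightarrow> (nat \<Rightarrow> real) \<Rightarrow> 'h" where
  "LK \<phi> K x = (\<Sum>k=1..K. x k *\<^sub>R \<phi> k)"

definition on_sphere :: "nat \<Rightarrow> (nat \<Rightarrow> real) \<Rightarrow> bool" where
  "on_sphere K v \<longleftrightarrow> (\<Sum>k=1..K. (v k)\<^sup>2) = 1"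

definition rho_in :: "('p \<Rightarrow> 'h \<Rightarrow> real) \<Rightarrow> 'h \<Rightarrow> (nat \<Rightarrow> 'h::real_vector) \<Rightarrow> nat
    \<Rightarrow> 'p \<Rightarrow> (nat \<Rightarrow> real) \<Rightarrow> 'h \<Rightarrow> ereal" where
  "rho_in gj \<xi> \<phi> K w v z = Inf {ereal r | r. r \<ge> 0 \<and> gj w (\<xi> + z + r *\<^sub>R LK \<phi> K v) \<le> 0}"

definition rho_out :: "('p \<Rightarrow> 'h \<Rightarrow> real) \<Rightarrow> 'h \<Rightarrow> (nat \<Rightarrow> 'h::real_vector) \<Rightarrow> nat
    \<Rightarrow> 'p \<Rightarrow> (nat \<Rightarrow> real) \<Rightarrow> 'h \<Rightarrow> ereal" where
  "rho_out gj \<xi> \<phi> K w v z =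
     (let S = {ereal r | r. r \<ge> 0 \<and> gj w (\<xi> + z + r *\<^sub>R LK \<phi> K v) \<le> 0}
      in if S = {} then 0 else Sup S)"

text \<open>Index sets (defined at the fixed reference parameter u).\<close>
definition J_in :: "(nat \<Rightarrow> 'p \<Rightarrow> 'h \<Rightarrow> real) \<Rightarrow> nat \<Rightarrow> 'p \<Rightarrow> 'h::real_vector \<Rightarrow> 'h \<Rightarrow> nat set" where
  "J_in g M u \<xi> z = {j \<in> {1..M}. g j u (\<xi> + z) < 0}"

definition J_out :: "(nat \<Rightarrow> 'p \<Rightarrow> 'h \<Rightarrow> real) \<Rightarrow> nat \<Rightarrow> 'p \<Rightarrow> 'h::real_vector \<Rightarrow> 'h \<Rightarrow> nat set" where
  "J_out g M u \<xi> z = {j \<in> {1..M}. g j u (\<xi> + z) > 0}"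

definition rho_in_t :: "(nat \<Rightarrow> 'p \<Rightarrow> 'h \<Rightarrow> real) \<Rightarrow> nat \<Rightarrow> 'p \<Rightarrow> 'h \<Rightarrow> (nat \<Rightarrow> 'h::real_vector)
    \<Rightarrow> nat \<Rightarrow> 'p \<Rightarrow> (nat \<Rightarrow> real) \<Rightarrow> 'h \<Rightarrow> ereal" where
  "rho_in_t g M u \<xi> \<phi> K w v z =
     (if J_out g M u \<xi> z = {} then 0
      else Max ((\<lambda>j. rho_in (g j) \<xi> \<phi> K w v z) ` J_out g M u \<xi> z))"

definition rho_out_t :: "(nat \<Rightarrow> 'p \<Rightarrow> 'h \<Rightarrow> real) \<Rightarrow> nat \<Rightarrow> 'p \<Rightarrow> 'h \<Rightarrow> (nat \<Rightarrow> 'h::real_vector)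
    \<Rightarrow> nat \<Rightarrow> 'p \<Rightarrow> (nat \<Rightarrow> real) \<Rightarrow> 'h \<Rightarrow> ereal" where
  "rho_out_t g M u \<xi> \<phi> K w v z =
     (if J_in g M u \<xi> z = {} then \<infinity>
      else Min ((\<lambda>j. rho_out (g j) \<xi> \<phi> K w v z) ` J_in g M u \<xi> z))"

end

theory Submission
  imports Defs
begin

(*
  Along the ray r \<mapsto> \<xi> + z + r L v every constraint g_j(w, .) is affine, with value
  a_j(w) + r b_j(w) where a_j and b_j are differentiable in the parameter w.  Hence every crossing
  distance is an explicit quotient -a_j(w) / b_j(w), or \<infinity> when b_j(w) \<le> 0, and rho_out, rho_in
  are a minimum and a maximum of finitely many such quotients.  By Assumption A3 the extremal
  constraint is unique, so near u the extremum is a single quotient, and F(quotient) is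
  differentiable by the quotient and chain rules.  A distance that is infinite at u does not
  contribute to first order: a_j stays below a negative constant while b_j(w) = O(|w - u|), so the
  distance is at least c / |w - u|, and the Markov bound 1 - F(R) \<le> K / R^2 for the Chi
  distribution (E[chi_K^2] = K) makes the contribution O(|w - u|^2).  Finally, Assumption A2
  means that near u the window [rho_in, rho_out] stays either non-degenerate or empty, so
  max 0 (F(rho_out) - F(rho_in)) coincides near u with one of two differentiable branches.
*)

section \<open>The Chi distribution\<close>

lemma chi_pdf_nonneg: "chi_pdf K r \<ge> 0"
proof (cases "K = 0")
  case False
  then show ?thesis
    unfolding chi_pdf_def by (auto intro!: divide_nonneg_pos)
qed (simp add: chi_pdf_def)

lemma continuous_on_chi_pdf:
  assumes "K \<ge> 1" "A \<subseteq> {0..}"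
  shows "continuous_on A (chi_pdf K)"
proof -
  have "Gamma (real K / 2) > 0"
    using assms by (intro Gamma_real_pos) simp
  then have "continuous_on {0..} (\<lambda>r. r ^ (K - 1) * exp (- (r\<^sup>2) / 2) /
      (2 powr (real K / 2 - 1) * Gamma (real K / 2)))"
    by (intro continuous_intros) auto
  then have "continuous_on {0..} (chi_pdf K)"
    by (rule continuous_on_eq) (auto simp: chi_pdf_def)
  then show ?thesis
    using assms(2) by (rule continuous_on_subset)
qed

lemma chi_pdf_integrable_on: "K \<ge> 1 \<Longrightarrow> 0 \<le> a \<Longrightarrow> chi_pdf K integrable_on {a..b}"
  by (auto intro!: integrable_continuous_interval continuous_on_chi_pdf)

lemma chi_cdf_nonneg: "K \<ge> 1 \<Longrightarrow> chi_cdf K r \<ge> 0"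
  unfolding chi_cdf_def by (auto intro!: integral_nonneg chi_pdf_integrable_on chi_pdf_nonneg)

lemma chi_cdf_mono:
  assumes "r \<le> s" "K \<ge> 1"
  shows "chi_cdf K r \<le> chi_cdf K s"
proof (cases "r \<le> 0")
  case True
  then show ?thesis
    using chi_cdf_nonneg[of K s] assms by (simp add: chi_cdf_def)
next
  case False
  have "integral {0..s} (chi_pdf K) = integral {0..r} (chi_pdf K) + integral {r..s} (chi_pdf K)"
    using False assms by (intro Henstock_Kurzweil_Integration.integral_combine[symmetric]
        chi_pdf_integrable_on) auto
  moreover have "integral {r..s} (chi_pdf K) \<ge> 0"
    using False assms by (intro integral_nonneg chi_pdf_integrable_on chi_pdf_nonneg) auto
  ultimately show ?thesis
    using False assms by (simp add: chi_cdf_def)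
qed

lemma chi_cdf_has_real_derivative:
  assumes "r > 0" "K \<ge> 1"
  shows "(chi_cdf K has_real_derivative chi_pdf K r) (at r)"
proof -
  have "((\<lambda>x. integral {0..x} (chi_pdf K)) has_real_derivative chi_pdf K r) (at r within {0..r+1})"
    using assms by (intro integral_has_real_derivative continuous_on_chi_pdf) auto
  then have "((\<lambda>x. integral {0..x} (chi_pdf K)) has_real_derivative chi_pdf K r) (at r)"
    using assms by (subst (asm) at_within_interior) (auto simp: interior_atLeastAtMost_real)
  then show ?thesis
    by (rule has_field_derivative_transform_within_open[where S="{0<..}"])
       (use assms in \<open>auto simp: chi_cdf_def\<close>)
qed

lemma Gamma_integrand_half_square:
  assumes "x > 0" "K \<ge> 1"
  shows "(x\<^sup>2 / 2) powr (real K / 2 - 1) / exp (x\<^sup>2 / 2) * x = Gamma (real K / 2) * chi_pdf K x"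
proof -
  have "(x\<^sup>2 / 2) powr (real K / 2 - 1) = (x powr 2) powr (real K / 2 - 1) / 2 powr (real K / 2 - 1)"
    using assms by (simp add: powr_divide powr_realpow)
  also have "(x powr 2) powr (real K / 2 - 1) = x powr (real K - 2)"
    by (simp add: powr_powr algebra_simps)
  finally have "(x\<^sup>2 / 2) powr (real K / 2 - 1) * x = x * x powr (real K - 2) / 2 powr (real K / 2 - 1)"
    by simp
  also have "x * x powr (real K - 2) = x powr (1 + (real K - 2))"
    using assms by (intro powr_mult_base) simp
  also have "x powr (1 + (real K - 2)) = x ^ (K - 1)"
    using assms by (simp add: of_nat_diff flip: powr_realpow)
  finally have "(x\<^sup>2 / 2) powr (real K / 2 - 1) * x = x ^ (K - 1) / 2 powr (real K / 2 - 1)" .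
  moreover have "Gamma (real K / 2) \<noteq> 0"
    using assms by (simp add: order_less_imp_not_eq2)
  ultimately show ?thesis
    using assms by (simp add: chi_pdf_def exp_minus divide_simps)
qed

lemma nn_integral_Gamma_integrand_initial:
  assumes "R > 0" "K \<ge> 1"
  shows "(\<integral>\<^sup>+t. ennreal (t powr (real K / 2 - 1) / exp t) * indicator {0..R\<^sup>2 / 2} t \<partial>lborel)
    = ennreal (Gamma (real K / 2) * chi_cdf K R)"
proof -
  let ?f = "\<lambda>t. t powr (real K / 2 - 1) / exp t"
  have "(\<integral>\<^sup>+t. ennreal (?f t) * indicator {0..R\<^sup>2 / 2} t \<partial>lborel)
      = (\<integral>\<^sup>+t. ennreal (?f t * indicator {(\<lambda>x. x\<^sup>2 / 2) 0..(\<lambda>x. x\<^sup>2 / 2) R} t) \<partial>lborel)"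
    by (intro nn_integral_cong) (auto simp: indicator_def)
  also have "\<dots> = (\<integral>\<^sup>+x. ennreal (?f (x\<^sup>2 / 2) * x * indicator {0..R} x) \<partial>lborel)"
  proof (rule nn_integral_substitution)
    show "set_borel_measurable borel {(0::real)\<^sup>2 / 2..R\<^sup>2 / 2} ?f"
      unfolding set_borel_measurable_def by measurable
  qed (use assms in \<open>auto intro!: derivative_eq_intros continuous_intros\<close>)
  also have "\<dots> = (\<integral>\<^sup>+x. ennreal (Gamma (real K / 2)) * (ennreal (chi_pdf K x) * indicator {0..R} x) \<partial>lborel)"
  proof (rule nn_integral_cong_AE)
    have "ennreal (?f (x\<^sup>2 / 2) * x * indicator {0..R} x)
        = ennreal (Gamma (real K / 2)) * (ennreal (chi_pdf K x) * indicator {0..R} x)" if "x \<noteq> 0" for x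
      using that Gamma_integrand_half_square[of x K] assms
      by (cases "x \<in> {0..R}") (auto simp: ennreal_mult' chi_pdf_nonneg indicator_def)
    then show "AE x in lborel. ennreal (?f (x\<^sup>2 / 2) * x * indicator {0..R} x)
        = ennreal (Gamma (real K / 2)) * (ennreal (chi_pdf K x) * indicator {0..R} x)"
      by (intro AE_mp[OF AE_lborel_singleton[of 0] AE_I2]) blast
  qed
  also have "\<dots> = ennreal (Gamma (real K / 2)) * (\<integral>\<^sup>+x. ennreal (chi_pdf K x) * indicator {0..R} x \<partial>lborel)"
    unfolding chi_pdf_def by (intro nn_integral_cmult) measurable
  also have "(\<integral>\<^sup>+x. ennreal (chi_pdf K x) * indicator {0..R} x \<partial>lborel) = ennreal (chi_cdf K R)"
    using assms unfolding chi_cdf_def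
    by (intro nn_integral_has_integral_lebesgue' integrable_integral chi_pdf_integrable_on)
       (auto simp: chi_pdf_nonneg chi_pdf_integrable_on)
  finally show ?thesis
    using assms by (simp add: ennreal_mult chi_cdf_nonneg)
qed

lemma nn_integral_Gamma_integrand_tail:
  assumes "s > 0" "T > 0"
  shows "(\<integral>\<^sup>+t. ennreal (t powr (s - 1) / exp t) * indicator {T<..} t \<partial>lborel) \<le> ennreal (s * Gamma s / T)"
proof -
  have "(\<integral>\<^sup>+t. ennreal (t powr (s - 1) / exp t) * indicator {T<..} t \<partial>lborel)
      \<le> (\<integral>\<^sup>+t. ennreal (1 / T) * ennreal (indicator {0..} t * t powr ((s + 1) - 1) / exp t) \<partial>lborel)"
  proof (intro nn_integral_mono)
    fix t
    show "ennreal (t powr (s - 1) / exp t) * indicator {T<..} t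
        \<le> ennreal (1 / T) * ennreal (indicator {0..} t * t powr ((s + 1) - 1) / exp t)"
    proof (cases "t > T")
      case True
      have "t powr (s - 1) = t powr s / t"
        using True assms by (simp add: powr_diff)
      also have "\<dots> \<le> t powr s / T"
        using True assms by (intro divide_left_mono) auto
      finally have "t powr (s - 1) / exp t \<le> (t powr s / T) / exp t"
        by (rule divide_right_mono) simp
      then show ?thesis
        using True assms by (simp add: ennreal_mult'[symmetric] ennreal_leI)
    qed simp
  qed
  also have "\<dots> = ennreal (1 / T) * ennreal (Gamma (s + 1))"
    using assms by (subst nn_integral_cmult) (auto simp: Gamma_conv_nn_integral_real)
  also have "\<dots> = ennreal (s * Gamma s / T)"
  proof -
    have "s \<notin> \<int>\<^sub>\<le>\<^sub>0"
      using assms by (auto dest: nonpos_Ints_nonpos)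
    then show ?thesis
      using assms by (simp add: ennreal_mult'[symmetric] Gamma_plus1)
  qed
  finally show ?thesis .
qed

lemma chi_cdf_upper_tail:
  assumes "K \<ge> 1" "R > 0"
  shows "0 \<le> 1 - chi_cdf K R \<and> 1 - chi_cdf K R \<le> real K / R\<^sup>2"
proof -
  define s where "s = real K / 2"
  define T where "T = R\<^sup>2 / 2"
  have s: "s > 0" and T: "T > 0"
    using assms by (simp_all add: s_def T_def)
  let ?f = "\<lambda>t. t powr (s - 1) / exp t"
  define B where "B = (\<integral>\<^sup>+t. ennreal (?f t) * indicator {T<..} t \<partial>lborel)"
  have "ennreal (Gamma s)
      = (\<integral>\<^sup>+t. ennreal (?f t) * indicator {0..T} t + ennreal (?f t) * indicator {T<..} t \<partial>lborel)"
    unfolding Gamma_conv_nn_integral_real[OF s]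
    using T by (intro nn_integral_cong) (auto simp: indicator_def)
  also have "\<dots> = ennreal (Gamma s * chi_cdf K R) + B"
    unfolding B_def using assms
    by (subst nn_integral_add) (auto simp: s_def T_def nn_integral_Gamma_integrand_initial)
  finally have split: "ennreal (Gamma s) = ennreal (Gamma s * chi_cdf K R) + B" .
  have B_le: "B \<le> ennreal (s * Gamma s / T)"
    unfolding B_def using s T by (rule nn_integral_Gamma_integrand_tail)
  then obtain b where b: "B = ennreal b" "b \<ge> 0"
    by (cases B) (auto simp: top_unique)
  have G: "Gamma s > 0"
    using s by (rule Gamma_real_pos)
  have "Gamma s = Gamma s * chi_cdf K R + b"
    using split b s assms by (simp add: chi_cdf_nonneg flip: ennreal_plus)
  then have "1 - chi_cdf K R = b / Gamma s"
    using G by (simp add: field_simps)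
  moreover have "b / Gamma s \<le> s / T"
    using B_le b s T G by (simp add: ennreal_le_iff pos_divide_le_eq)
  moreover have "0 \<le> b / Gamma s"
    using b G by simp
  ultimately show ?thesis
    by (simp add: s_def T_def field_simps)
qed

lemma chi_cdf_le_1: "K \<ge> 1 \<Longrightarrow> chi_cdf K r \<le> 1"
  using chi_cdf_upper_tail[of K r] by (cases "r > 0") (auto simp: chi_cdf_def)

lemma chi_cdf_e_ereal [simp]: "chi_cdf_e K (ereal r) = chi_cdf K r"
  by (simp add: chi_cdf_e_def)

lemma chi_cdf_e_bounds: "K \<ge> 1 \<Longrightarrow> 0 \<le> chi_cdf_e K r \<and> chi_cdf_e K r \<le> 1"
  by (auto simp: chi_cdf_e_def chi_cdf_nonneg chi_cdf_le_1)

lemma chi_cdf_e_mono: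
  assumes "K \<ge> 1" "r \<le> s"
  shows "chi_cdf_e K r \<le> chi_cdf_e K s"
  using assms chi_cdf_e_bounds[OF assms(1), of r] chi_cdf_e_bounds[OF assms(1), of s]
  by (cases r; cases s) (auto simp: chi_cdf_e_def chi_cdf_mono)

lemma chi_cdf_e_upper_tail:
  assumes "K \<ge> 1" "\<rho> > 0" "ereal \<rho> \<le> r"
  shows "1 - chi_cdf_e K r \<le> real K / \<rho>\<^sup>2"
  using chi_cdf_e_mono[OF assms(1,3)] chi_cdf_upper_tail[OF assms(1,2)] by simp

section \<open>Crossing distance of an affine function along a ray\<close>

(* For a < 0: the distance r \<ge> 0 at which a + r b reaches 0, i.e. sup {r \<ge> 0. a + r b \<le> 0}. *)
definition ray_crossing :: "real \<Rightarrow> real \<Rightarrow> ereal" where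
  "ray_crossing a b = (if b > 0 then ereal (- a / b) else \<infinity>)"

lemma ray_crossing_pos: "a < 0 \<Longrightarrow> 0 < ray_crossing a b"
  by (auto simp: ray_crossing_def divide_neg_pos)

lemma ray_crossing_lower_bound:
  assumes "a \<le> - c" "c > 0" "b \<le> \<beta>" "\<beta> > 0"
  shows "ereal (c / \<beta>) \<le> ray_crossing a b"
proof (cases "b > 0")
  case True
  have "c / \<beta> \<le> c / b"
    using assms True by (intro divide_left_mono) auto
  also have "\<dots> \<le> - a / b"
    using assms True by (intro divide_right_mono) auto
  finally show ?thesis
    using True by (simp add: ray_crossing_def)
qed (simp add: ray_crossing_def)

lemma tendsto_ray_crossing_infinity:
  assumes a: "(a \<longlongrightarrow> a0) F" "a0 < 0" and b: "(b \<longlongrightarrow> 0) F"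
  shows "((\<lambda>w. ray_crossing (a w) (b w)) \<longlongrightarrow> \<infinity>) F"
  unfolding tendsto_PInfty
proof
  fix r :: real
  define c where "c = - a0 / 2"
  define m where "m = max r 0 + 1"
  have "c > 0" "m > 0" "r < m"
    using a(2) by (auto simp: c_def m_def)
  have "eventually (\<lambda>w. a w \<le> - c) F"
    using order_tendstoD(2)[OF a(1), of "a0 / 2"] a(2) by (auto simp: c_def elim: eventually_mono)
  moreover have "eventually (\<lambda>w. b w \<le> c / m) F"
    using order_tendstoD(2)[OF b, of "c / m"] \<open>c > 0\<close> \<open>m > 0\<close> by (auto elim: eventually_mono)
  ultimately show "eventually (\<lambda>w. ereal r < ray_crossing (a w) (b w)) F"
  proof eventually_elim
    case (elim w)
    have "ereal r < ereal (c / (c / m))"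
      using \<open>r < m\<close> \<open>c > 0\<close> by simp
    also have "\<dots> \<le> ray_crossing (a w) (b w)"
      using elim \<open>c > 0\<close> \<open>m > 0\<close> by (intro ray_crossing_lower_bound) auto
    finally show ?case .
  qed
qed

lemma tendsto_ray_crossing:
  assumes a: "(a \<longlongrightarrow> a0) F" "a0 < 0" and b: "(b \<longlongrightarrow> b0) F"
  shows "((\<lambda>w. ray_crossing (a w) (b w)) \<longlongrightarrow> ray_crossing a0 b0) F"
proof (cases b0 "0 :: real" rule: linorder_cases)
  case less
  have "eventually (\<lambda>w. ray_crossing (a w) (b w) = \<infinity>) F"
    using order_tendstoD(2)[OF b less] by eventually_elim (simp add: ray_crossing_def)
  then show ?thesis
    using less by (simp add: ray_crossing_def tendsto_eventually)
next
  case greater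
  have "((\<lambda>w. ereal (- a w / b w)) \<longlongrightarrow> ereal (- a0 / b0)) F"
    using greater by (intro tendsto_intros a b) auto
  moreover have "eventually (\<lambda>w. ereal (- a w / b w) = ray_crossing (a w) (b w)) F"
    using order_tendstoD(1)[OF b greater] by eventually_elim (simp add: ray_crossing_def)
  ultimately have "((\<lambda>w. ray_crossing (a w) (b w)) \<longlongrightarrow> ereal (- a0 / b0)) F"
    by (rule Lim_transform_eventually)
  then show ?thesis
    using greater by (simp add: ray_crossing_def)
next
  case equal
  then show ?thesis
    using tendsto_ray_crossing_infinity[OF a] b by (simp add: ray_crossing_def)
qed

lemma rho_out_eq_ray_crossing:
  assumes line: "\<And>r. gj w (\<xi> + z + r *\<^sub>R LK \<phi> K v) = a + r * b" and "a < 0"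
  shows "rho_out gj \<xi> \<phi> K w v z = ray_crossing a b"
proof -
  define S where "S = {ereal r | r. r \<ge> 0 \<and> a + r * b \<le> 0}"
  have "ereal 0 \<in> S"
    using \<open>a < 0\<close> by (auto simp: S_def)
  moreover have "Sup S = ray_crossing a b"
  proof (cases "b > 0")
    case True
    have "ereal (- a / b) \<in> S"
      using True \<open>a < 0\<close> by (auto simp: S_def field_simps intro!: exI[of _ "- a / b"])
    moreover have "x \<le> ereal (- a / b)" if "x \<in> S" for x
      using that True by (auto simp: S_def field_simps)
    ultimately show ?thesis
      using True by (auto simp: ray_crossing_def intro: Sup_eqI)
  next
    case False
    have "a + max R 0 * b \<le> 0" for R
      using False \<open>a < 0\<close> by (intro add_nonpos_nonpos mult_nonneg_nonpos) auto
    then have "ereal (max R 0) \<in> S" for R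
      unfolding S_def by (intro CollectI exI[of _ "max R 0"]) auto
    then have "ereal R \<le> Sup S" for R
      by (meson Sup_upper ereal_less_eq(3) max.cobounded1 order_trans)
    then have "Sup S = \<infinity>"
      by (rule ereal_top)
    then show ?thesis
      using False by (simp add: ray_crossing_def)
  qed
  ultimately show ?thesis
    unfolding rho_out_def line S_def[symmetric] Let_def by auto
qed

lemma rho_in_eq_ray_crossing:
  assumes line: "\<And>r. gj w (\<xi> + z + r *\<^sub>R LK \<phi> K v) = a + r * b" and "a > 0"
  shows "rho_in gj \<xi> \<phi> K w v z = ray_crossing (- a) (- b)"
proof -
  define S where "S = {ereal r | r. r \<ge> 0 \<and> a + r * b \<le> 0}"
  have "Inf S = ray_crossing (- a) (- b)"
  proof (cases "b < 0")
    case True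
    have "ereal (- a / b) \<in> S"
      using True \<open>a > 0\<close> by (auto simp: S_def field_simps intro!: exI[of _ "- a / b"])
    moreover have "ereal (- a / b) \<le> x" if "x \<in> S" for x
      using that True by (auto simp: S_def field_simps)
    ultimately show ?thesis
      using True by (auto simp: ray_crossing_def intro: Inf_eqI)
  next
    case False
    then have "S = {}"
      using \<open>a > 0\<close> by (auto simp: S_def not_le intro: add_pos_nonneg)
    then show ?thesis
      using False by (simp add: ray_crossing_def top_ereal_def)
  qed
  then show ?thesis
    unfolding rho_in_def line S_def by simp
qed

lemma has_derivative_zero_squeeze:
  fixes f t :: "'a::real_normed_vector \<Rightarrow> real"
  assumes "(t has_derivative (\<lambda>h. 0)) (at u)" "t u = 0" "f u = 0"
    and "eventually (\<lambda>w. \<bar>f w\<bar> \<le> t w) (at u)"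
  shows "(f has_derivative (\<lambda>h. 0)) (at u)"
proof -
  have "((\<lambda>w. \<bar>t w\<bar> / norm (w - u)) \<longlongrightarrow> 0) (at u)"
    using assms(1,2) by (simp add: has_derivative_iff_norm)
  moreover have "eventually (\<lambda>w. norm (norm (f w - f u - 0) / norm (w - u)) \<le> \<bar>t w\<bar> / norm (w - u)) (at u)"
    using assms(4) by eventually_elim (use assms(3) in \<open>auto intro!: divide_right_mono\<close>)
  ultimately show ?thesis
    unfolding has_derivative_iff_norm by (auto intro: Lim_null_comparison)
qed

lemma eventually_less_tendsto:
  fixes f g :: "'a \<Rightarrow> 'b::{linorder_topology, dense_linorder}"
  assumes "(f \<longlongrightarrow> a) F" "(g \<longlongrightarrow> b) F" "a < b"
  shows "eventually (\<lambda>x. f x < g x) F"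
proof -
  obtain c where "a < c" "c < b"
    using dense[OF assms(3)] by blast
  then have "eventually (\<lambda>x. f x < c) F" "eventually (\<lambda>x. c < g x) F"
    using assms(1,2) by (auto intro: order_tendstoD)
  then show ?thesis
    by eventually_elim simp
qed

lemma tendsto_Min_image:
  fixes f :: "'i \<Rightarrow> 'a \<Rightarrow> 'b::linorder_topology"
  assumes "finite J" "J \<noteq> {}" "\<And>j. j \<in> J \<Longrightarrow> (f j \<longlongrightarrow> l j) F"
  shows "((\<lambda>x. Min ((\<lambda>j. f j x) ` J)) \<longlongrightarrow> Min (l ` J)) F"
  using assms
proof (induction J rule: finite_ne_induct)
  case (insert j J)
  then show ?case
    by (simp add: tendsto_min)
qed simp

lemma tendsto_Max_image:
  fixes f :: "'i \<Rightarrow> 'a \<Rightarrow> 'b::linorder_topology"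
  assumes "finite J" "J \<noteq> {}" "\<And>j. j \<in> J \<Longrightarrow> (f j \<longlongrightarrow> l j) F"
  shows "((\<lambda>x. Max ((\<lambda>j. f j x) ` J)) \<longlongrightarrow> Max (l ` J)) F"
  using assms
proof (induction J rule: finite_ne_induct)
  case (insert j J)
  then show ?case
    by (simp add: tendsto_max)
qed simp

lemma eventually_Min_image_eq_unique_argmin:
  fixes f :: "'i \<Rightarrow> 'a \<Rightarrow> 'b::{linorder_topology, dense_linorder}"
  assumes "finite J" "i \<in> J" "\<And>j. j \<in> J \<Longrightarrow> (f j \<longlongrightarrow> f j u) F"
    and "\<And>j. j \<in> J \<Longrightarrow> j \<noteq> i \<Longrightarrow> f i u < f j u"
  shows "eventually (\<lambda>x. Min ((\<lambda>j. f j x) ` J) = f i x) F"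
proof -
  have "eventually (\<lambda>x. \<forall>j\<in>J - {i}. f i x < f j x) F"
    using assms by (intro eventually_ball_finite ballI eventually_less_tendsto) auto
  then show ?thesis
  proof eventually_elim
    case (elim x)
    show ?case
      using elim assms(1,2) by (intro Min_eqI) (auto intro: less_imp_le)
  qed
qed

lemma eventually_Max_image_eq_unique_argmax:
  fixes f :: "'i \<Rightarrow> 'a \<Rightarrow> 'b::{linorder_topology, dense_linorder}"
  assumes "finite J" "i \<in> J" "\<And>j. j \<in> J \<Longrightarrow> (f j \<longlongrightarrow> f j u) F"
    and "\<And>j. j \<in> J \<Longrightarrow> j \<noteq> i \<Longrightarrow> f j u < f i u"
  shows "eventually (\<lambda>x. Max ((\<lambda>j. f j x) ` J) = f i x) F"
proof -
  have "eventually (\<lambda>x. \<forall>j\<in>J - {i}. f j x < f i x) F"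
    using assms by (intro eventually_ball_finite ballI eventually_less_tendsto) auto
  then show ?thesis
  proof eventually_elim
    case (elim x)
    show ?case
      using elim assms(1,2) by (intro Max_eqI) (auto intro: less_imp_le)
  qed
qed

lemma has_derivative_ray_family:
  fixes a b :: "'a::real_inner \<Rightarrow> real"
  assumes "\<And>r. ((\<lambda>w. a w + r * b w) has_derivative (\<lambda>h. D r \<bullet> h)) F"
  shows "(a has_derivative (\<lambda>h. D 0 \<bullet> h)) F" "(b has_derivative (\<lambda>h. (D 1 - D 0) \<bullet> h)) F"
proof -
  show "(a has_derivative (\<lambda>h. D 0 \<bullet> h)) F"
    using assms[of 0] by simp
  have "((\<lambda>w. (a w + 1 * b w) - (a w + 0 * b w)) has_derivative (\<lambda>h. D 1 \<bullet> h - D 0 \<bullet> h)) F"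
    by (intro has_derivative_diff assms)
  then show "(b has_derivative (\<lambda>h. (D 1 - D 0) \<bullet> h)) F"
    by (simp add: inner_diff_left)
qed

lemma isCont_ray_family:
  fixes a b :: "'a::real_inner \<Rightarrow> real"
  assumes "\<And>r. ((\<lambda>w. a w + r * b w) has_derivative (\<lambda>h. D r \<bullet> h)) (at u)"
  shows "isCont a u" "isCont b u"
  using has_derivative_ray_family[OF assms] by (auto intro: has_derivative_continuous)

lemma has_derivative_chi_cdf_ray_crossing:
  fixes a b :: "'a::real_inner \<Rightarrow> real"
  assumes D: "\<And>r. ((\<lambda>w. a w + r * b w) has_derivative (\<lambda>h. D r \<bullet> h)) (at u)"
    and "a u < 0" "b u > 0" "K \<ge> 1"
  shows "((\<lambda>w. chi_cdf_e K (ray_crossing (a w) (b w))) has_derivative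
    (\<lambda>h. ((- chi_pdf K (- a u / b u) / b u) *\<^sub>R D (- a u / b u)) \<bullet> h)) (at u)"
proof -
  define \<rho> where "\<rho> = - a u / b u"
  have "\<rho> > 0"
    using assms by (simp add: \<rho>_def divide_neg_pos)
  have "a u + \<rho> * b u = 0"
    using assms by (simp add: \<rho>_def)
  \<comment> \<open>\<open>- a / b = \<rho> - (a + \<rho> b) / b\<close>, and the numerator vanishes at \<open>u\<close>\<close>
  then have "((\<lambda>w. (a w + \<rho> * b w) / b w) has_derivative (\<lambda>h. D \<rho> \<bullet> h / b u)) (at u)"
    using has_derivative_divide[OF D[of \<rho>] has_derivative_ray_family(2)[OF D]] assms by simp
  then have "((\<lambda>w. \<rho> - (a w + \<rho> * b w) / b w) has_derivative (\<lambda>h. - (D \<rho> \<bullet> h / b u))) (at u)"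
    using has_derivative_diff[OF has_derivative_const] by fastforce
  moreover have "(chi_cdf K has_derivative (*) (chi_pdf K \<rho>)) (at (\<rho> - (a u + \<rho> * b u) / b u))"
    using chi_cdf_has_real_derivative[OF \<open>\<rho> > 0\<close> \<open>K \<ge> 1\<close>] \<open>a u + \<rho> * b u = 0\<close>
    by (simp add: has_field_derivative_def)
  ultimately have "((\<lambda>w. chi_cdf K (\<rho> - (a w + \<rho> * b w) / b w)) has_derivative
      (\<lambda>h. chi_pdf K \<rho> * - (D \<rho> \<bullet> h / b u))) (at u)"
    by (rule has_derivative_compose)
  moreover have "eventually (\<lambda>w. chi_cdf K (\<rho> - (a w + \<rho> * b w) / b w) =
      chi_cdf_e K (ray_crossing (a w) (b w))) (at u)"
    using order_tendstoD(1)[OF isContD[OF isCont_ray_family(2)[OF D]] \<open>b u > 0\<close>]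
    by eventually_elim (simp add: ray_crossing_def field_simps)
  ultimately have "((\<lambda>w. chi_cdf_e K (ray_crossing (a w) (b w))) has_derivative
      (\<lambda>h. chi_pdf K \<rho> * - (D \<rho> \<bullet> h / b u))) (at u)"
    by (rule has_derivative_transform_eventually)
       (use assms \<open>a u + \<rho> * b u = 0\<close> in \<open>auto simp: ray_crossing_def \<rho>_def\<close>)
  then show ?thesis
    by (simp add: \<rho>_def)
qed

lemma eventually_le_linear_has_derivative:
  fixes f :: "'a::real_inner \<Rightarrow> real"
  assumes "(f has_derivative (\<lambda>h. f' \<bullet> h)) (at u)"
  shows "eventually (\<lambda>w. f w \<le> f u + (norm f' + 1) * norm (w - u)) (at u)"
proof -
  obtain d where "d > 0" and d: "\<And>w. norm (w - u) < d \<Longrightarrow> norm (f w - f u - f' \<bullet> (w - u)) \<le> 1 * norm (w - u)"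
    using assms unfolding has_derivative_at_alt by (meson zero_less_one)
  have "f w \<le> f u + (norm f' + 1) * norm (w - u)" if "norm (w - u) < d" for w
    using d[OF that] Cauchy_Schwarz_ineq2[of f' "w - u"] by (simp add: algebra_simps)
  then show ?thesis
    using \<open>d > 0\<close> unfolding eventually_at by (auto simp: dist_norm)
qed

lemma has_derivative_zero_chi_tail_ray_crossing:
  fixes a b :: "'a::real_inner \<Rightarrow> real"
  assumes D: "\<And>r. ((\<lambda>w. a w + r * b w) has_derivative (\<lambda>h. D r \<bullet> h)) (at u)"
    and "a u < 0" "b u \<le> 0" "K \<ge> 1"
  shows "((\<lambda>w. 1 - chi_cdf_e K (ray_crossing (a w) (b w))) has_derivative (\<lambda>h. 0)) (at u)"
proof -
  define c where "c = - a u / 2"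
  define L where "L = norm (D 1 - D 0) + 1"
  define t where "t w = real K * (L / c)\<^sup>2 * (norm (w - u))\<^sup>2" for w
  have "c > 0" "L > 0"
    using assms by (auto simp: c_def L_def add_nonneg_pos)
  \<comment> \<open>for \<open>w\<close> near \<open>u\<close> the crossing distance is at least \<open>c / (L \<parallel>w - u\<parallel>)\<close>, so the tail is \<open>O(\<parallel>w - u\<parallel>\<^sup>2)\<close>\<close>
  have "((\<lambda>w. t w) has_derivative (\<lambda>h. real K * (L / c)\<^sup>2 * (h \<bullet> (u - u) + (u - u) \<bullet> h))) (at u)"
    unfolding t_def power2_norm_eq_inner by (auto intro!: derivative_eq_intros)
  then have t: "(t has_derivative (\<lambda>h. 0)) (at u)"
    by simp
  have "eventually (\<lambda>w. a w \<le> - c) (at u)"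
    using order_tendstoD(2)[OF isContD[OF isCont_ray_family(1)[OF D]], of "- c"] \<open>a u < 0\<close>
    by (auto simp: c_def elim: eventually_mono)
  moreover have "eventually (\<lambda>w. b w \<le> L * norm (w - u)) (at u)"
    using eventually_le_linear_has_derivative[OF has_derivative_ray_family(2)[OF D]] \<open>b u \<le> 0\<close>
    by (auto simp: L_def elim: eventually_mono)
  moreover have "eventually (\<lambda>w. w \<noteq> u) (at u)"
    by (rule eventually_neq_at_within)
  ultimately have "eventually (\<lambda>w. \<bar>1 - chi_cdf_e K (ray_crossing (a w) (b w))\<bar> \<le> t w) (at u)"
  proof eventually_elim
    case (elim w)
    then have "L * norm (w - u) > 0"
      using \<open>L > 0\<close> by simp
    with elim \<open>c > 0\<close> have "1 - chi_cdf_e K (ray_crossing (a w) (b w)) \<le> real K / (c / (L * norm (w - u)))\<^sup>2"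
      by (intro chi_cdf_e_upper_tail ray_crossing_lower_bound \<open>K \<ge> 1\<close>) auto
    also have "\<dots> = t w"
      using \<open>c > 0\<close> by (simp add: t_def field_simps)
    finally show ?case
      using chi_cdf_e_bounds[OF \<open>K \<ge> 1\<close>] by simp
  qed
  then show ?thesis
    by (intro has_derivative_zero_squeeze[OF t])
       (use \<open>b u \<le> 0\<close> in \<open>auto simp: t_def ray_crossing_def chi_cdf_e_def\<close>)
qed

section \<open>First exit and last entry for finitely many constraints\<close>

(*
  Constraint j has value a j w + r * b j w at distance r along the ray; J collects the constraints
  that are strictly satisfied (first_exit) resp. strictly violated (last_entry) at its origin.
*)
definition first_exit :: "'i set \<Rightarrow> ('i \<Rightarrow> 'a \<Rightarrow> real) \<Rightarrow> ('i \<Rightarrow> 'a \<Rightarrow> real) \<Rightarrow> 'a \<Rightarrow> ereal" where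
  "first_exit J a b w = (if J = {} then \<infinity> else Min ((\<lambda>j. ray_crossing (a j w) (b j w)) ` J))"

definition last_entry :: "'i set \<Rightarrow> ('i \<Rightarrow> 'a \<Rightarrow> real) \<Rightarrow> ('i \<Rightarrow> 'a \<Rightarrow> real) \<Rightarrow> 'a \<Rightarrow> ereal" where
  "last_entry J a b w = (if J = {} then 0 else Max ((\<lambda>j. ray_crossing (- a j w) (- b j w)) ` J))"

lemma first_exit_le: "finite J \<Longrightarrow> j \<in> J \<Longrightarrow> first_exit J a b w \<le> ray_crossing (a j w) (b j w)"
  by (auto simp: first_exit_def)

lemma last_entry_ge: "finite J \<Longrightarrow> j \<in> J \<Longrightarrow> ray_crossing (- a j w) (- b j w) \<le> last_entry J a b w"
  by (auto simp: last_entry_def)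

lemma first_exit_attained:
  assumes "finite J" "J \<noteq> {}"
  obtains j where "j \<in> J" "first_exit J a b w = ray_crossing (a j w) (b j w)"
proof -
  have "first_exit J a b w \<in> (\<lambda>j. ray_crossing (a j w) (b j w)) ` J"
    using assms by (simp add: first_exit_def)
  then show ?thesis
    using that by blast
qed

lemma last_entry_attained:
  assumes "finite J" "J \<noteq> {}"
  obtains j where "j \<in> J" "last_entry J a b w = ray_crossing (- a j w) (- b j w)"
proof -
  have "last_entry J a b w \<in> (\<lambda>j. ray_crossing (- a j w) (- b j w)) ` J"
    using assms by (simp add: last_entry_def)
  then show ?thesis
    using that by blast
qed

lemma tendsto_first_exit:
  assumes "finite J" "\<And>j. j \<in> J \<Longrightarrow> (a j \<longlongrightarrow> a j u) F" "\<And>j. j \<in> J \<Longrightarrow> (b j \<longlongrightarrow> b j u) F"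
    and "\<And>j. j \<in> J \<Longrightarrow> a j u < 0"
  shows "(first_exit J a b \<longlongrightarrow> first_exit J a b u) F"
  using assms unfolding first_exit_def
  by (cases "J = {}") (auto intro!: tendsto_Min_image tendsto_ray_crossing)

lemma tendsto_last_entry:
  assumes "finite J" "\<And>j. j \<in> J \<Longrightarrow> (a j \<longlongrightarrow> a j u) F" "\<And>j. j \<in> J \<Longrightarrow> (b j \<longlongrightarrow> b j u) F"
    and "\<And>j. j \<in> J \<Longrightarrow> a j u > 0"
  shows "(last_entry J a b \<longlongrightarrow> last_entry J a b u) F"
  using assms unfolding last_entry_def
  by (cases "J = {}") (auto intro!: tendsto_Max_image tendsto_ray_crossing tendsto_minus)

lemma has_derivative_chi_cdf_first_exit_infinite:
  fixes a b :: "'i \<Rightarrow> 'a::real_inner \<Rightarrow> real"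
  assumes "finite J" "K \<ge> 1"
    and D: "\<And>j r. j \<in> J \<Longrightarrow> ((\<lambda>w. a j w + r * b j w) has_derivative (\<lambda>h. D j r \<bullet> h)) (at u)"
    and "\<And>j. j \<in> J \<Longrightarrow> a j u < 0" "first_exit J a b u = \<infinity>"
  shows "((\<lambda>w. chi_cdf_e K (first_exit J a b w)) has_derivative (\<lambda>h. 0)) (at u)"
proof -
  define t where "t w = (\<Sum>j\<in>J. 1 - chi_cdf_e K (ray_crossing (a j w) (b j w)))" for w
  have crossing_u: "ray_crossing (a j u) (b j u) = \<infinity>" if "j \<in> J" for j
    using first_exit_le[OF \<open>finite J\<close> that, where a=a and b=b and w=u] assms(5) by simp
  have b_nonpos: "b j u \<le> 0" if "j \<in> J" for j
    using crossing_u[OF that] by (auto simp: ray_crossing_def split: if_splits)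
  have "((\<lambda>w. 1 - chi_cdf_e K (ray_crossing (a j w) (b j w))) has_derivative (\<lambda>h. 0)) (at u)"
    if "j \<in> J" for j
    using D[OF that] assms(4)[OF that] b_nonpos[OF that] \<open>K \<ge> 1\<close>
    by (rule has_derivative_zero_chi_tail_ray_crossing)
  then have "(t has_derivative (\<lambda>h. \<Sum>j\<in>J. 0)) (at u)"
    unfolding t_def by (rule has_derivative_sum)
  then have t: "(t has_derivative (\<lambda>h. 0)) (at u)"
    by simp
  have tail_nonneg: "0 \<le> 1 - chi_cdf_e K r" for r
    using chi_cdf_e_bounds[OF \<open>K \<ge> 1\<close>] by simp
  have "\<bar>1 - chi_cdf_e K (first_exit J a b w)\<bar> \<le> t w" for w
  proof (cases "J = {}")
    case False
    then obtain j where "j \<in> J" "first_exit J a b w = ray_crossing (a j w) (b j w)"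
      by (rule first_exit_attained[OF \<open>finite J\<close>])
    moreover have "1 - chi_cdf_e K (ray_crossing (a j w) (b j w)) \<le> t w"
      unfolding t_def by (rule member_le_sum) (use \<open>j \<in> J\<close> \<open>finite J\<close> tail_nonneg in auto)
    ultimately show ?thesis
      using tail_nonneg by simp
  qed (simp add: t_def first_exit_def chi_cdf_e_def)
  moreover have "t u = 0"
    by (simp add: t_def crossing_u chi_cdf_e_def)
  ultimately have "((\<lambda>w. 1 - chi_cdf_e K (first_exit J a b w)) has_derivative (\<lambda>h. 0)) (at u)"
    using assms(5)
    by (intro has_derivative_zero_squeeze[OF t] always_eventually) (simp_all add: chi_cdf_e_def)
  then have "((\<lambda>w. 1 - (1 - chi_cdf_e K (first_exit J a b w))) has_derivative (\<lambda>h. 0 - 0)) (at u)"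
    by (intro has_derivative_diff has_derivative_const)
  then show ?thesis
    by simp
qed

lemma has_derivative_chi_cdf_first_exit_argmin:
  fixes a b :: "'i \<Rightarrow> 'a::real_inner \<Rightarrow> real"
  assumes "finite J" "K \<ge> 1"
    and D: "\<And>j r. j \<in> J \<Longrightarrow> ((\<lambda>w. a j w + r * b j w) has_derivative (\<lambda>h. D j r \<bullet> h)) (at u)"
    and a_neg: "\<And>j. j \<in> J \<Longrightarrow> a j u < 0" and "first_exit J a b u < \<infinity>"
    and argmin: "i \<in> J" "\<And>j. j \<in> J \<Longrightarrow> ray_crossing (a j u) (b j u) = first_exit J a b u \<longleftrightarrow> j = i"
  defines "\<rho> \<equiv> real_of_ereal (first_exit J a b u)"
  shows "((\<lambda>w. chi_cdf_e K (first_exit J a b w)) has_derivative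
    (\<lambda>h. ((- chi_pdf K \<rho> / b i u) *\<^sub>R D i \<rho>) \<bullet> h)) (at u)"
proof -
  have cont: "((\<lambda>w. ray_crossing (a j w) (b j w)) \<longlongrightarrow> ray_crossing (a j u) (b j u)) (at u)" if "j \<in> J" for j
    using isCont_ray_family[OF D[OF that]] a_neg[OF that] by (intro tendsto_ray_crossing isContD)
  have i_u: "ray_crossing (a i u) (b i u) = first_exit J a b u"
    using argmin by simp
  have "ray_crossing (a i u) (b i u) < ray_crossing (a j u) (b j u)" if "j \<in> J" "j \<noteq> i" for j
    using first_exit_le[OF \<open>finite J\<close> that(1), where a=a and b=b and w=u] argmin(2)[OF that(1)] that(2) i_u
    by (auto simp: order.strict_iff_order)
  then have "eventually (\<lambda>w. Min ((\<lambda>j. ray_crossing (a j w) (b j w)) ` J)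
      = ray_crossing (a i w) (b i w)) (at u)"
    using argmin(1) \<open>finite J\<close> cont by (intro eventually_Min_image_eq_unique_argmin) auto
  then have "eventually (\<lambda>w. chi_cdf_e K (ray_crossing (a i w) (b i w))
      = chi_cdf_e K (first_exit J a b w)) (at u)"
    by eventually_elim (use argmin(1) in \<open>auto simp: first_exit_def\<close>)
  moreover have "b i u > 0" "\<rho> = - a i u / b i u"
    using \<open>first_exit J a b u < \<infinity>\<close> unfolding \<rho>_def i_u[symmetric]
    by (auto simp: ray_crossing_def split: if_splits)
  ultimately show ?thesis
    using has_derivative_chi_cdf_ray_crossing[OF D[OF argmin(1)] a_neg[OF argmin(1)] _ \<open>K \<ge> 1\<close>] i_u
    by (auto elim: has_derivative_transform_eventually)
qed

lemma has_derivative_chi_cdf_last_entry_argmax: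
  fixes a b :: "'i \<Rightarrow> 'a::real_inner \<Rightarrow> real"
  assumes "finite J" "K \<ge> 1"
    and D: "\<And>j r. j \<in> J \<Longrightarrow> ((\<lambda>w. a j w + r * b j w) has_derivative (\<lambda>h. D j r \<bullet> h)) (at u)"
    and a_pos: "\<And>j. j \<in> J \<Longrightarrow> a j u > 0" and "last_entry J a b u < \<infinity>"
    and argmax: "i \<in> J" "\<And>j. j \<in> J \<Longrightarrow> ray_crossing (- a j u) (- b j u) = last_entry J a b u \<longleftrightarrow> j = i"
  defines "\<rho> \<equiv> real_of_ereal (last_entry J a b u)"
  shows "((\<lambda>w. chi_cdf_e K (last_entry J a b w)) has_derivative
    (\<lambda>h. ((- chi_pdf K \<rho> / b i u) *\<^sub>R D i \<rho>) \<bullet> h)) (at u)"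
proof -
  have D': "((\<lambda>w. - a j w + r * - b j w) has_derivative (\<lambda>h. (- D j r) \<bullet> h)) (at u)" if "j \<in> J" for j r
    using has_derivative_minus[OF D[OF that]] by simp
  have cont: "((\<lambda>w. ray_crossing (- a j w) (- b j w)) \<longlongrightarrow> ray_crossing (- a j u) (- b j u)) (at u)"
    if "j \<in> J" for j
    using isCont_ray_family[OF D'[OF that]] a_pos[OF that] by (intro tendsto_ray_crossing isContD) auto
  have i_u: "ray_crossing (- a i u) (- b i u) = last_entry J a b u"
    using argmax by simp
  have "ray_crossing (- a j u) (- b j u) < ray_crossing (- a i u) (- b i u)" if "j \<in> J" "j \<noteq> i" for j
    using last_entry_ge[OF \<open>finite J\<close> that(1), where a=a and b=b and w=u] argmax(2)[OF that(1)] that(2) i_u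
    by (auto simp: order.strict_iff_order)
  then have "eventually (\<lambda>w. Max ((\<lambda>j. ray_crossing (- a j w) (- b j w)) ` J)
      = ray_crossing (- a i w) (- b i w)) (at u)"
    using argmax(1) \<open>finite J\<close> cont by (intro eventually_Max_image_eq_unique_argmax) auto
  then have "eventually (\<lambda>w. chi_cdf_e K (ray_crossing (- a i w) (- b i w))
      = chi_cdf_e K (last_entry J a b w)) (at u)"
    by eventually_elim (use argmax(1) in \<open>auto simp: last_entry_def\<close>)
  moreover have "- b i u > 0" "\<rho> = - (- a i u) / (- b i u)"
    using \<open>last_entry J a b u < \<infinity>\<close> unfolding \<rho>_def i_u[symmetric]
    by (auto simp: ray_crossing_def split: if_splits)
  ultimately show ?thesis
    using has_derivative_chi_cdf_ray_crossing[OF D'[OF argmax(1)] _ _ \<open>K \<ge> 1\<close>] a_pos[OF argmax(1)] i_u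
    by (auto elim: has_derivative_transform_eventually)
qed

lemma has_derivative_chi_window_entry_infinite:
  fixes a b :: "'i \<Rightarrow> 'a::real_inner \<Rightarrow> real"
  assumes "finite J" "K \<ge> 1"
    and D: "\<And>j r. j \<in> J \<Longrightarrow> ((\<lambda>w. a j w + r * b j w) has_derivative (\<lambda>h. D j r \<bullet> h)) (at u)"
    and a_pos: "\<And>j. j \<in> J \<Longrightarrow> a j u > 0" and "last_entry J a b u = \<infinity>"
  shows "((\<lambda>w. max 0 (chi_cdf_e K (X w) - chi_cdf_e K (last_entry J a b w))) has_derivative (\<lambda>h. 0)) (at u)"
proof -
  have "J \<noteq> {}"
    using \<open>last_entry J a b u = \<infinity>\<close> by (auto simp: last_entry_def)
  then obtain j where "j \<in> J" "last_entry J a b u = ray_crossing (- a j u) (- b j u)"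
    by (rule last_entry_attained[OF \<open>finite J\<close>])
  with \<open>last_entry J a b u = \<infinity>\<close> have j: "ray_crossing (- a j u) (- b j u) = \<infinity>"
    by simp
  have D': "((\<lambda>w. - a j w + r * - b j w) has_derivative (\<lambda>h. (- D j r) \<bullet> h)) (at u)" for r
    using has_derivative_minus[OF D[OF \<open>j \<in> J\<close>]] by simp
  have "- a j u < 0" "- b j u \<le> 0"
    using a_pos[OF \<open>j \<in> J\<close>] j by (auto simp: ray_crossing_def split: if_splits)
  with D' have tail:
    "((\<lambda>w. 1 - chi_cdf_e K (ray_crossing (- a j w) (- b j w))) has_derivative (\<lambda>h. 0)) (at u)"
    using \<open>K \<ge> 1\<close> by (rule has_derivative_zero_chi_tail_ray_crossing)
  have bound: "\<bar>max 0 (chi_cdf_e K (X w) - chi_cdf_e K (last_entry J a b w))\<bar>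
      \<le> 1 - chi_cdf_e K (ray_crossing (- a j w) (- b j w))" for w
  proof -
    have "chi_cdf_e K (ray_crossing (- a j w) (- b j w)) \<le> chi_cdf_e K (last_entry J a b w)"
      using \<open>finite J\<close> \<open>j \<in> J\<close> by (intro chi_cdf_e_mono \<open>K \<ge> 1\<close> last_entry_ge)
    moreover have "chi_cdf_e K (X w) \<le> 1" "0 \<le> 1 - chi_cdf_e K (ray_crossing (- a j w) (- b j w))"
      using chi_cdf_e_bounds[OF \<open>K \<ge> 1\<close>] by simp_all
    ultimately show ?thesis
      by linarith
  qed
  have "max 0 (chi_cdf_e K (X u) - chi_cdf_e K (last_entry J a b u)) = 0"
    using chi_cdf_e_bounds[OF \<open>K \<ge> 1\<close>, of "X u"] \<open>last_entry J a b u = \<infinity>\<close> by (simp add: chi_cdf_e_def)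
  moreover have "1 - chi_cdf_e K (ray_crossing (- a j u) (- b j u)) = 0"
    using j by (simp add: chi_cdf_e_def)
  ultimately show ?thesis
    using has_derivative_zero_squeeze[OF tail] bound by (simp add: always_eventually)
qed

lemma has_derivative_chi_cdf_first_exit:
  fixes a b :: "'i \<Rightarrow> 'a::real_inner \<Rightarrow> real"
  assumes "finite J" "K \<ge> 1"
    and D: "\<And>j r. j \<in> J \<Longrightarrow> ((\<lambda>w. a j w + r * b j w) has_derivative (\<lambda>h. D j r \<bullet> h)) (at u)"
    and a_neg: "\<And>j. j \<in> J \<Longrightarrow> a j u < 0"
    and argmin: "first_exit J a b u < \<infinity> \<Longrightarrow>
      i \<in> J \<and> (\<forall>j\<in>J. ray_crossing (a j u) (b j u) = first_exit J a b u \<longleftrightarrow> j = i)"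
  defines "E \<equiv> first_exit J a b u"
  shows "((\<lambda>w. chi_cdf_e K (first_exit J a b w)) has_derivative (\<lambda>h.
    (if E = \<infinity> then 0 else (- chi_pdf_e K E / b i u) *\<^sub>R D i (real_of_ereal E)) \<bullet> h)) (at u)"
proof (cases "E = \<infinity>")
  case True
  then show ?thesis
    using has_derivative_chi_cdf_first_exit_infinite[OF assms(1-4)] by (simp add: E_def)
next
  case False
  then have "i \<in> J" "\<And>j. j \<in> J \<Longrightarrow> ray_crossing (a j u) (b j u) = E \<longleftrightarrow> j = i"
    using argmin by (auto simp: E_def less_top)
  moreover from this have "0 < E"
    using ray_crossing_pos[OF a_neg[OF \<open>i \<in> J\<close>], of "b i u"] by metis
  moreover have "((\<lambda>w. chi_cdf_e K (first_exit J a b w)) has_derivative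
      (\<lambda>h. ((- chi_pdf K (real_of_ereal E) / b i u) *\<^sub>R D i (real_of_ereal E)) \<bullet> h)) (at u)"
    using calculation False unfolding E_def
    by (intro has_derivative_chi_cdf_first_exit_argmin[OF assms(1-4)]) (auto simp: less_top)
  ultimately show ?thesis
    using False by (simp add: chi_pdf_e_def)
qed

lemma has_derivative_chi_cdf_last_entry:
  fixes a b :: "'i \<Rightarrow> 'a::real_inner \<Rightarrow> real"
  assumes "finite J" "K \<ge> 1"
    and D: "\<And>j r. j \<in> J \<Longrightarrow> ((\<lambda>w. a j w + r * b j w) has_derivative (\<lambda>h. D j r \<bullet> h)) (at u)"
    and a_pos: "\<And>j. j \<in> J \<Longrightarrow> a j u > 0" and "last_entry J a b u < \<infinity>"
    and argmax: "0 < last_entry J a b u \<Longrightarrow>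
      i \<in> J \<and> (\<forall>j\<in>J. ray_crossing (- a j u) (- b j u) = last_entry J a b u \<longleftrightarrow> j = i)"
  defines "E \<equiv> last_entry J a b u"
  shows "((\<lambda>w. chi_cdf_e K (last_entry J a b w)) has_derivative (\<lambda>h.
    (if 0 < E then (- chi_pdf_e K E / b i u) *\<^sub>R D i (real_of_ereal E) else 0) \<bullet> h)) (at u)"
proof (cases "J = {}")
  case True
  then show ?thesis
    by (simp add: E_def last_entry_def)
next
  case False
  then obtain j where "j \<in> J"
    by blast
  then have "0 < E"
    using ray_crossing_pos[of "- a j u" "- b j u"] a_pos
      last_entry_ge[OF \<open>finite J\<close> \<open>j \<in> J\<close>, where a=a and b=b and w=u]
    by (auto simp: E_def)
  moreover have "((\<lambda>w. chi_cdf_e K (last_entry J a b w)) has_derivative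
      (\<lambda>h. ((- chi_pdf K (real_of_ereal E) / b i u) *\<^sub>R D i (real_of_ereal E)) \<bullet> h)) (at u)"
    using argmax[folded E_def, OF \<open>0 < E\<close>] \<open>last_entry J a b u < \<infinity>\<close> unfolding E_def
    by (intro has_derivative_chi_cdf_last_entry_argmax[OF assms(1-5)]) auto
  ultimately show ?thesis
    using \<open>last_entry J a b u < \<infinity>\<close> by (simp add: E_def chi_pdf_e_def)
qed

lemma has_derivative_chi_window_nonempty:
  fixes OUT IN :: "'a::real_normed_vector \<Rightarrow> ereal"
  assumes "K \<ge> 1" "(OUT \<longlongrightarrow> OUT u) (at u)" "(IN \<longlongrightarrow> IN u) (at u)" "IN u < OUT u"
    and "((\<lambda>w. chi_cdf_e K (OUT w)) has_derivative FO) (at u)"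
    and "((\<lambda>w. chi_cdf_e K (IN w)) has_derivative FI) (at u)"
  shows "((\<lambda>w. max 0 (chi_cdf_e K (OUT w) - chi_cdf_e K (IN w))) has_derivative (\<lambda>h. FO h - FI h)) (at u)"
proof -
  have "eventually (\<lambda>w. IN w < OUT w) (at u)"
    using assms(3,2,4) by (rule eventually_less_tendsto)
  then have "eventually (\<lambda>w. chi_cdf_e K (OUT w) - chi_cdf_e K (IN w)
      = max 0 (chi_cdf_e K (OUT w) - chi_cdf_e K (IN w))) (at u)"
    by eventually_elim (use chi_cdf_e_mono[OF \<open>K \<ge> 1\<close>] in force)
  moreover have "chi_cdf_e K (OUT u) - chi_cdf_e K (IN u) = max 0 (chi_cdf_e K (OUT u) - chi_cdf_e K (IN u))"
    using chi_cdf_e_mono[OF \<open>K \<ge> 1\<close>, of "IN u" "OUT u"] \<open>IN u < OUT u\<close> by simp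
  ultimately show ?thesis
    using has_derivative_diff[OF assms(5,6)] by (auto elim: has_derivative_transform_eventually)
qed

lemma has_derivative_chi_window_empty:
  fixes OUT IN :: "'a::real_normed_vector \<Rightarrow> ereal"
  assumes "K \<ge> 1" "(OUT \<longlongrightarrow> OUT u) (at u)" "(IN \<longlongrightarrow> IN u) (at u)" "OUT u < IN u"
  shows "((\<lambda>w. max 0 (chi_cdf_e K (OUT w) - chi_cdf_e K (IN w))) has_derivative (\<lambda>h. 0)) (at u)"
proof -
  have "eventually (\<lambda>w. OUT w < IN w) (at u)"
    using assms(2-4) by (rule eventually_less_tendsto)
  then have "eventually (\<lambda>w. 0 = max 0 (chi_cdf_e K (OUT w) - chi_cdf_e K (IN w))) (at u)"
    by eventually_elim (use chi_cdf_e_mono[OF \<open>K \<ge> 1\<close>] in force)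
  moreover have "0 = max 0 (chi_cdf_e K (OUT u) - chi_cdf_e K (IN u))"
    using chi_cdf_e_mono[OF \<open>K \<ge> 1\<close>, of "OUT u" "IN u"] \<open>OUT u < IN u\<close> by simp
  ultimately show ?thesis
    by (rule has_derivative_transform_eventually[OF has_derivative_const]) simp
qed

(* S j r: slope of constraint j along the ray at distance r; D j r: its gradient in the parameter. *)
definition window_gradient ::
    "nat \<Rightarrow> ereal \<Rightarrow> ereal \<Rightarrow> ('i \<Rightarrow> real \<Rightarrow> real) \<Rightarrow> ('i \<Rightarrow> real \<Rightarrow> 'a::real_vector) \<Rightarrow> 'i \<Rightarrow> 'i \<Rightarrow> 'a" where
  "window_gradient K rout rin S D j1 j2 =
    (if rin < rout then
       (if rout = \<infinity> then 0 else (- chi_pdf_e K rout / S j2 (real_of_ereal rout)) *\<^sub>R D j2 (real_of_ereal rout))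
     + (if 0 < rin \<and> rin < \<infinity> then (chi_pdf_e K rin / S j1 (real_of_ereal rin)) *\<^sub>R D j1 (real_of_ereal rin)
        else 0)
     else 0)"

lemma window_gradient_cong:
  assumes "rout < \<infinity> \<Longrightarrow> S j2 (real_of_ereal rout) = S' j2 (real_of_ereal rout)"
    and "0 < rin \<Longrightarrow> rin < \<infinity> \<Longrightarrow> S j1 (real_of_ereal rin) = S' j1 (real_of_ereal rin)"
  shows "window_gradient K rout rin S D j1 j2 = window_gradient K rout rin S' D j1 j2"
  using assms by (auto simp: window_gradient_def less_top)

lemma has_derivative_chi_window:
  fixes a b :: "'i \<Rightarrow> 'a::real_inner \<Rightarrow> real" and Ji Jo :: "'i set"
  defines "OUT \<equiv> first_exit Ji a b" and "IN \<equiv> last_entry Jo a b"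
  assumes "finite Ji" "finite Jo" "K \<ge> 1"
    and D: "\<And>j r. j \<in> Ji \<union> Jo \<Longrightarrow> ((\<lambda>w. a j w + r * b j w) has_derivative (\<lambda>h. D j r \<bullet> h)) (at u)"
    and a_neg: "\<And>j. j \<in> Ji \<Longrightarrow> a j u < 0" and a_pos: "\<And>j. j \<in> Jo \<Longrightarrow> a j u > 0"
    and distinct: "IN u < \<infinity> \<Longrightarrow> IN u \<noteq> OUT u"
    and exit: "OUT u < \<infinity> \<Longrightarrow> j2 \<in> Ji \<and> (\<forall>j\<in>Ji. ray_crossing (a j u) (b j u) = OUT u \<longleftrightarrow> j = j2)"
    and entry: "0 < IN u \<Longrightarrow> IN u < \<infinity> \<Longrightarrow>
      j1 \<in> Jo \<and> (\<forall>j\<in>Jo. ray_crossing (- a j u) (- b j u) = IN u \<longleftrightarrow> j = j1)"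
  shows "((\<lambda>w. max 0 (chi_cdf_e K (OUT w) - chi_cdf_e K (IN w))) has_derivative
    (\<lambda>h. window_gradient K (OUT u) (IN u) (\<lambda>j r. b j u) D j1 j2 \<bullet> h)) (at u)"
proof -
  have Di: "((\<lambda>w. a j w + r * b j w) has_derivative (\<lambda>h. D j r \<bullet> h)) (at u)" if "j \<in> Ji" for j r
    using D that by blast
  have Do: "((\<lambda>w. a j w + r * b j w) has_derivative (\<lambda>h. D j r \<bullet> h)) (at u)" if "j \<in> Jo" for j r
    using D that by blast
  have "(a j \<longlongrightarrow> a j u) (at u)" "(b j \<longlongrightarrow> b j u) (at u)" if "j \<in> Ji \<union> Jo" for j
    using isCont_ray_family[OF D[OF that]] by (auto intro: isContD)
  then have lim: "(OUT \<longlongrightarrow> OUT u) (at u)" "(IN \<longlongrightarrow> IN u) (at u)"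
    unfolding OUT_def IN_def using \<open>finite Ji\<close> \<open>finite Jo\<close> a_neg a_pos
    by (auto intro!: tendsto_first_exit tendsto_last_entry)
  consider (entry_infinite) "IN u = \<infinity>" | (nonempty) "IN u < OUT u" "IN u < \<infinity>" | (empty) "OUT u < IN u"
  proof (cases "IN u = \<infinity>")
    case False
    then have "IN u < \<infinity>" "IN u \<noteq> OUT u"
      using distinct by (auto simp: less_top)
    then show ?thesis
      using that(2,3) by (cases "IN u < OUT u") auto
  qed
  then show ?thesis
  proof cases
    case entry_infinite
    then show ?thesis
      using has_derivative_chi_window_entry_infinite[OF \<open>finite Jo\<close> \<open>K \<ge> 1\<close> Do a_pos]
      by (simp add: IN_def window_gradient_def)
  next
    case nonempty
    have "((\<lambda>w. max 0 (chi_cdf_e K (OUT w) - chi_cdf_e K (IN w))) has_derivative (\<lambda>h.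
      (if OUT u = \<infinity> then 0 else (- chi_pdf_e K (OUT u) / b j2 u) *\<^sub>R D j2 (real_of_ereal (OUT u))) \<bullet> h
      - (if 0 < IN u then (- chi_pdf_e K (IN u) / b j1 u) *\<^sub>R D j1 (real_of_ereal (IN u)) else 0) \<bullet> h)) (at u)"
      using nonempty exit entry unfolding OUT_def IN_def
      by (intro has_derivative_chi_window_nonempty[OF \<open>K \<ge> 1\<close> lim[unfolded OUT_def IN_def]]
          has_derivative_chi_cdf_first_exit[OF \<open>finite Ji\<close> \<open>K \<ge> 1\<close> Di a_neg]
          has_derivative_chi_cdf_last_entry[OF \<open>finite Jo\<close> \<open>K \<ge> 1\<close> Do a_pos]) auto
    then show ?thesis
      by (rule has_derivative_eq_rhs)
         (use nonempty in \<open>simp add: window_gradient_def fun_eq_iff inner_diff_left inner_add_left\<close>)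
  next
    case empty
    then have "\<not> IN u < OUT u"
      by simp
    then show ?thesis
      using has_derivative_chi_window_empty[OF \<open>K \<ge> 1\<close> lim empty] by (simp add: window_gradient_def)
  qed
qed

section \<open>Constraints affine in the state variable\<close>

lemma affine_fun_on_line:
  fixes f :: "'h::real_vector \<Rightarrow> real"
  assumes "\<And>y y' t. f (t *\<^sub>R y + (1 - t) *\<^sub>R y') = t * f y + (1 - t) * f y'"
  shows "f (p + r *\<^sub>R L) = f p + r * (f (p + L) - f p)"
proof -
  have "p + r *\<^sub>R L = r *\<^sub>R (p + L) + (1 - r) *\<^sub>R p"
    by (simp add: algebra_simps)
  then show ?thesis
    using assms[of r "p + L" p] by (simp add: algebra_simps)
qed

lemma has_derivative_partial_fst:
  fixes f :: "'p::real_inner \<Rightarrow> 'h::real_inner \<Rightarrow> real"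
  assumes "((\<lambda>(w, y). f w y) has_derivative (\<lambda>(dw, dy). fw \<bullet> dw + fy \<bullet> dy)) (at (u, y))"
  shows "((\<lambda>w. f w y) has_derivative (\<lambda>h. fw \<bullet> h)) (at u)"
  using has_derivative_compose[OF has_derivative_Pair[OF has_derivative_ident has_derivative_const] assms]
  by simp

lemma has_real_derivative_partial_snd_on_line:
  fixes f :: "'p::real_inner \<Rightarrow> 'h::real_inner \<Rightarrow> real"
  assumes "((\<lambda>(w, y). f w y) has_derivative (\<lambda>(dw, dy). fw \<bullet> dw + fy \<bullet> dy)) (at (u, p + s *\<^sub>R L))"
  shows "((\<lambda>r. f u (p + r *\<^sub>R L)) has_real_derivative fy \<bullet> L) (at s)"
proof -
  have "((\<lambda>r. (u, p + r *\<^sub>R L)) has_derivative (\<lambda>t. (0, t *\<^sub>R L))) (at s)"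
    by (auto intro!: derivative_eq_intros)
  from has_derivative_compose[OF this assms] show ?thesis
    by (simp add: has_field_derivative_def mult.commute[of _ "fy \<bullet> L"])
qed

lemma has_derivative_affine_ray_param:
  fixes f :: "'p::real_inner \<Rightarrow> 'h::real_inner \<Rightarrow> real"
  assumes "open U" "u \<in> U"
    and deriv: "((\<lambda>(w, y). f w y) has_derivative (\<lambda>(dw, dy). fw \<bullet> dw + fy \<bullet> dy)) (at (u, p + r *\<^sub>R L))"
    and affine: "\<And>w y y' t. w \<in> U \<Longrightarrow> f w (t *\<^sub>R y + (1 - t) *\<^sub>R y') = t * f w y + (1 - t) * f w y'"
  shows "((\<lambda>w. f w p + r * (f w (p + L) - f w p)) has_derivative (\<lambda>h. fw \<bullet> h)) (at u)"
  using has_derivative_partial_fst[OF deriv] \<open>open U\<close> \<open>u \<in> U\<close>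
  by (rule has_derivative_transform_within_open) (simp add: affine_fun_on_line affine)

lemma inner_gradient_affine_ray:
  fixes f :: "'p::real_inner \<Rightarrow> 'h::real_inner \<Rightarrow> real"
  assumes deriv: "((\<lambda>(w, y). f w y) has_derivative (\<lambda>(dw, dy). fw \<bullet> dw + fy \<bullet> dy)) (at (u, p + s *\<^sub>R L))"
    and affine: "\<And>y y' t. f u (t *\<^sub>R y + (1 - t) *\<^sub>R y') = t * f u y + (1 - t) * f u y'"
  shows "fy \<bullet> L = f u (p + L) - f u p"
proof -
  have "((\<lambda>r. f u p + r * (f u (p + L) - f u p)) has_real_derivative f u (p + L) - f u p) (at s)"
    by (auto intro!: derivative_eq_intros)
  then have "((\<lambda>r. f u (p + r *\<^sub>R L)) has_real_derivative f u (p + L) - f u p) (at s)"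
    by (simp add: affine_fun_on_line affine)
  with has_real_derivative_partial_snd_on_line[OF deriv] show ?thesis
    by (rule DERIV_unique)
qed

lemma rho_out_t_eq_first_exit:
  assumes "\<And>j r. j \<in> J_in g M u \<xi> z \<Longrightarrow> g j w (\<xi> + z + r *\<^sub>R LK \<phi> K v) = a j w + r * b j w"
    and "\<And>j. j \<in> J_in g M u \<xi> z \<Longrightarrow> a j w < 0"
  shows "rho_out_t g M u \<xi> \<phi> K w v z = first_exit (J_in g M u \<xi> z) a b w"
proof -
  have "rho_out (g j) \<xi> \<phi> K w v z = ray_crossing (a j w) (b j w)" if "j \<in> J_in g M u \<xi> z" for j
    using assms that by (intro rho_out_eq_ray_crossing)
  then show ?thesis
    unfolding rho_out_t_def first_exit_def by simp
qed

lemma rho_in_t_eq_last_entry: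
  assumes "\<And>j r. j \<in> J_out g M u \<xi> z \<Longrightarrow> g j w (\<xi> + z + r *\<^sub>R LK \<phi> K v) = a j w + r * b j w"
    and "\<And>j. j \<in> J_out g M u \<xi> z \<Longrightarrow> a j w > 0"
  shows "rho_in_t g M u \<xi> \<phi> K w v z = last_entry (J_out g M u \<xi> z) a b w"
proof -
  have "rho_in (g j) \<xi> \<phi> K w v z = ray_crossing (- a j w) (- b j w)" if "j \<in> J_out g M u \<xi> z" for j
    using assms that by (intro rho_in_eq_ray_crossing)
  then show ?thesis
    unfolding rho_in_t_def last_entry_def by simp
qed

lemma The_unique_member:
  assumes "\<exists>!j. j \<in> J \<and> P j"
  shows "(THE j. j \<in> J \<and> P j) \<in> J \<and> (\<forall>j\<in>J. P j \<longleftrightarrow> j = (THE j. j \<in> J \<and> P j))"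
  using theI'[OF assms] assms by blast

section \<open>The sample terms\<close>

definition sample_gradient :: "(nat \<Rightarrow> 'p \<Rightarrow> 'h \<Rightarrow> real) \<Rightarrow> (nat \<Rightarrow> 'p \<Rightarrow> 'h \<Rightarrow> 'p::real_vector)
    \<Rightarrow> (nat \<Rightarrow> 'p \<Rightarrow> 'h \<Rightarrow> 'h) \<Rightarrow> nat \<Rightarrow> 'p \<Rightarrow> 'h \<Rightarrow> (nat \<Rightarrow> 'h::real_inner) \<Rightarrow> nat
    \<Rightarrow> (nat \<Rightarrow> real) \<Rightarrow> 'h \<Rightarrow> 'p" where
  "sample_gradient g gu gz M u \<xi> \<phi> K v z =
    window_gradient K (rho_out_t g M u \<xi> \<phi> K u v z) (rho_in_t g M u \<xi> \<phi> K u v z)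
      (\<lambda>j r. gz j u (\<xi> + z + r *\<^sub>R LK \<phi> K v) \<bullet> LK \<phi> K v) (\<lambda>j r. gu j u (\<xi> + z + r *\<^sub>R LK \<phi> K v))
      (THE j. j \<in> J_out g M u \<xi> z \<and> rho_in (g j) \<xi> \<phi> K u v z = rho_in_t g M u \<xi> \<phi> K u v z)
      (THE j. j \<in> J_in g M u \<xi> z \<and> rho_out (g j) \<xi> \<phi> K u v z = rho_out_t g M u \<xi> \<phi> K u v z)"

lemma eventually_rho_t_eq_first_exit_last_entry:
  assumes "open U" "u \<in> U"
    and line: "\<And>j w r. j \<in> J_in g M u \<xi> z \<union> J_out g M u \<xi> z \<Longrightarrow> w \<in> U \<Longrightarrow>
      g j w (\<xi> + z + r *\<^sub>R LK \<phi> K v) = a j w + r * b j w"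
    and cont: "\<And>j. j \<in> J_in g M u \<xi> z \<union> J_out g M u \<xi> z \<Longrightarrow> isCont (a j) u"
  shows "eventually (\<lambda>w. rho_out_t g M u \<xi> \<phi> K w v z = first_exit (J_in g M u \<xi> z) a b w \<and>
    rho_in_t g M u \<xi> \<phi> K w v z = last_entry (J_out g M u \<xi> z) a b w) (nhds u)"
proof -
  have J: "finite (J_in g M u \<xi> z)" "finite (J_out g M u \<xi> z)"
    by (simp_all add: J_in_def J_out_def)
  have "a j u = g j u (\<xi> + z)" if "j \<in> J_in g M u \<xi> z \<union> J_out g M u \<xi> z" for j
    using line[OF that \<open>u \<in> U\<close>, of 0] by simp
  then have "\<forall>j\<in>J_in g M u \<xi> z. a j u < 0" "\<forall>j\<in>J_out g M u \<xi> z. a j u > 0"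
    by (auto simp: J_in_def J_out_def)
  moreover have "(a j \<longlongrightarrow> a j u) (nhds u)" if "j \<in> J_in g M u \<xi> z \<union> J_out g M u \<xi> z" for j
    using cont[OF that] by (simp add: isCont_def tendsto_at_iff_tendsto_nhds)
  ultimately have "eventually (\<lambda>w. w \<in> U \<and>
      (\<forall>j\<in>J_in g M u \<xi> z. a j w < 0) \<and> (\<forall>j\<in>J_out g M u \<xi> z. a j w > 0)) (nhds u)"
    using eventually_nhds_in_open[OF \<open>open U\<close> \<open>u \<in> U\<close>] J
    by (auto intro!: eventually_conj eventually_ball_finite order_tendstoD)
  then show ?thesis
    by eventually_elim (use line in \<open>auto intro!: rho_out_t_eq_first_exit rho_in_t_eq_last_entry\<close>)
qed

lemma has_derivative_sample_term_affine_rays: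
  fixes a b :: "nat \<Rightarrow> 'p::real_inner \<Rightarrow> real"
    and gu :: "nat \<Rightarrow> 'p \<Rightarrow> 'h::real_inner \<Rightarrow> 'p" and gz :: "nat \<Rightarrow> 'p \<Rightarrow> 'h \<Rightarrow> 'h"
  assumes "K \<ge> 1" "open U" "u \<in> U"
    and line: "\<And>j w r. j \<in> J_in g M u \<xi> z \<union> J_out g M u \<xi> z \<Longrightarrow> w \<in> U \<Longrightarrow>
      g j w (\<xi> + z + r *\<^sub>R LK \<phi> K v) = a j w + r * b j w"
    and D: "\<And>j r. j \<in> J_in g M u \<xi> z \<union> J_out g M u \<xi> z \<Longrightarrow>
      ((\<lambda>w. a j w + r * b j w) has_derivative (\<lambda>h. gu j u (\<xi> + z + r *\<^sub>R LK \<phi> K v) \<bullet> h)) (at u)"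
    and slope: "\<And>j r. j \<in> J_in g M u \<xi> z \<union> J_out g M u \<xi> z \<Longrightarrow>
      gz j u (\<xi> + z + r *\<^sub>R LK \<phi> K v) \<bullet> LK \<phi> K v = b j u"
    and A2: "rho_in_t g M u \<xi> \<phi> K u v z \<noteq> \<infinity> \<or> rho_out_t g M u \<xi> \<phi> K u v z \<noteq> \<infinity> \<Longrightarrow>
      rho_in_t g M u \<xi> \<phi> K u v z \<noteq> rho_out_t g M u \<xi> \<phi> K u v z"
    and A3_in: "0 < rho_in_t g M u \<xi> \<phi> K u v z \<Longrightarrow> rho_in_t g M u \<xi> \<phi> K u v z < \<infinity> \<Longrightarrow>
      \<exists>!j. j \<in> J_out g M u \<xi> z \<and> rho_in (g j) \<xi> \<phi> K u v z = rho_in_t g M u \<xi> \<phi> K u v z"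
    and A3_out: "rho_out_t g M u \<xi> \<phi> K u v z < \<infinity> \<Longrightarrow>
      \<exists>!j. j \<in> J_in g M u \<xi> z \<and> rho_out (g j) \<xi> \<phi> K u v z = rho_out_t g M u \<xi> \<phi> K u v z"
  shows "((\<lambda>w. max 0 (chi_cdf_e K (rho_out_t g M u \<xi> \<phi> K w v z) - chi_cdf_e K (rho_in_t g M u \<xi> \<phi> K w v z)))
    has_derivative (\<lambda>h. sample_gradient g gu gz M u \<xi> \<phi> K v z \<bullet> h)) (at u)"
proof -
  define Ji where "Ji = J_in g M u \<xi> z"
  define Jo where "Jo = J_out g M u \<xi> z"
  define OUT where "OUT = first_exit Ji a b u"
  define IN where "IN = last_entry Jo a b u"
  define j1 where "j1 = (THE j. j \<in> J_out g M u \<xi> z \<and> rho_in (g j) \<xi> \<phi> K u v z = IN)"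
  define j2 where "j2 = (THE j. j \<in> J_in g M u \<xi> z \<and> rho_out (g j) \<xi> \<phi> K u v z = OUT)"
  have "isCont (a j) u" if "j \<in> Ji \<union> Jo" for j
    using isCont_ray_family(1)[OF D] that by (auto simp: Ji_def Jo_def)
  then have "eventually (\<lambda>w. rho_out_t g M u \<xi> \<phi> K w v z = first_exit Ji a b w \<and>
      rho_in_t g M u \<xi> \<phi> K w v z = last_entry Jo a b w) (nhds u)"
    unfolding Ji_def Jo_def by (intro eventually_rho_t_eq_first_exit_last_entry[OF \<open>open U\<close> \<open>u \<in> U\<close> line])
  then have ev: "eventually (\<lambda>w. rho_out_t g M u \<xi> \<phi> K w v z = first_exit Ji a b w \<and>
      rho_in_t g M u \<xi> \<phi> K w v z = last_entry Jo a b w) (at u)"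
    and rho_t_u: "rho_out_t g M u \<xi> \<phi> K u v z = OUT" "rho_in_t g M u \<xi> \<phi> K u v z = IN"
    by (simp_all add: eventually_nhds_conv_at OUT_def IN_def)
  have sign_u: "\<forall>j\<in>Ji. a j u < 0" "\<forall>j\<in>Jo. a j u > 0"
    using line[OF _ \<open>u \<in> U\<close>, of _ 0] by (auto simp: Ji_def Jo_def J_in_def J_out_def)
  have "rho_out (g j) \<xi> \<phi> K u v z = ray_crossing (a j u) (b j u)" if "j \<in> Ji" for j
    using that sign_u line[OF _ \<open>u \<in> U\<close>] by (intro rho_out_eq_ray_crossing) (auto simp: Ji_def)
  then have exit: "j2 \<in> Ji \<and> (\<forall>j\<in>Ji. ray_crossing (a j u) (b j u) = OUT \<longleftrightarrow> j = j2)" if "OUT < \<infinity>"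
    using The_unique_member[OF A3_out[unfolded rho_t_u, OF that]]
    unfolding j2_def Ji_def[symmetric] by auto
  have "rho_in (g j) \<xi> \<phi> K u v z = ray_crossing (- a j u) (- b j u)" if "j \<in> Jo" for j
    using that sign_u line[OF _ \<open>u \<in> U\<close>] by (intro rho_in_eq_ray_crossing) (auto simp: Jo_def)
  then have entry: "j1 \<in> Jo \<and> (\<forall>j\<in>Jo. ray_crossing (- a j u) (- b j u) = IN \<longleftrightarrow> j = j1)"
    if "0 < IN" "IN < \<infinity>"
    using The_unique_member[OF A3_in[unfolded rho_t_u, OF that]]
    unfolding j1_def Jo_def[symmetric] by auto
  define G where "G = window_gradient K OUT IN (\<lambda>j r. b j u) (\<lambda>j r. gu j u (\<xi> + z + r *\<^sub>R LK \<phi> K v)) j1 j2"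
  have "sample_gradient g gu gz M u \<xi> \<phi> K v z = G"
    unfolding sample_gradient_def G_def rho_t_u j1_def[symmetric] j2_def[symmetric]
    using slope exit entry by (intro window_gradient_cong) (auto simp: Ji_def Jo_def)
  moreover have "((\<lambda>w. max 0 (chi_cdf_e K (first_exit Ji a b w) - chi_cdf_e K (last_entry Jo a b w)))
      has_derivative (\<lambda>h. G \<bullet> h)) (at u)"
    unfolding G_def OUT_def IN_def
    by (rule has_derivative_chi_window[OF _ _ \<open>K \<ge> 1\<close> D[unfolded Ji_def[symmetric] Jo_def[symmetric]]])
       (use sign_u A2 exit entry in \<open>auto simp: rho_t_u OUT_def IN_def Ji_def Jo_def J_in_def J_out_def\<close>)
  ultimately show ?thesis
    using ev rho_t_u
    by (auto simp: OUT_def IN_def elim!: has_derivative_transform_eventually elim: eventually_mono)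
qed

lemma has_derivative_sample_term:
  fixes g :: "nat \<Rightarrow> 'p::real_inner \<Rightarrow> 'h::real_inner \<Rightarrow> real"
    and gu :: "nat \<Rightarrow> 'p \<Rightarrow> 'h \<Rightarrow> 'p" and gz :: "nat \<Rightarrow> 'p \<Rightarrow> 'h \<Rightarrow> 'h"
  assumes "K \<ge> 1" "open U" "u \<in> U"
    and deriv: "\<And>j y. j \<in> {1..M} \<Longrightarrow>
      ((\<lambda>(w, y). g j w y) has_derivative (\<lambda>(dw, dy). gu j u y \<bullet> dw + gz j u y \<bullet> dy)) (at (u, y))"
    and affine: "\<And>j w y y' t. j \<in> {1..M} \<Longrightarrow> w \<in> U \<Longrightarrow>
      g j w (t *\<^sub>R y + (1 - t) *\<^sub>R y') = t * g j w y + (1 - t) * g j w y'"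
    and A2: "rho_in_t g M u \<xi> \<phi> K u v z \<noteq> \<infinity> \<or> rho_out_t g M u \<xi> \<phi> K u v z \<noteq> \<infinity> \<Longrightarrow>
      rho_in_t g M u \<xi> \<phi> K u v z \<noteq> rho_out_t g M u \<xi> \<phi> K u v z"
    and A3_in: "0 < rho_in_t g M u \<xi> \<phi> K u v z \<Longrightarrow> rho_in_t g M u \<xi> \<phi> K u v z < \<infinity> \<Longrightarrow>
      \<exists>!j. j \<in> J_out g M u \<xi> z \<and> rho_in (g j) \<xi> \<phi> K u v z = rho_in_t g M u \<xi> \<phi> K u v z"
    and A3_out: "rho_out_t g M u \<xi> \<phi> K u v z < \<infinity> \<Longrightarrow>
      \<exists>!j. j \<in> J_in g M u \<xi> z \<and> rho_out (g j) \<xi> \<phi> K u v z = rho_out_t g M u \<xi> \<phi> K u v z"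
  shows "((\<lambda>w. max 0 (chi_cdf_e K (rho_out_t g M u \<xi> \<phi> K w v z) - chi_cdf_e K (rho_in_t g M u \<xi> \<phi> K w v z)))
    has_derivative (\<lambda>h. sample_gradient g gu gz M u \<xi> \<phi> K v z \<bullet> h)) (at u)"
proof -
  let ?y = "\<xi> + z" and ?L = "LK \<phi> K v"
  have J: "j \<in> {1..M}" if "j \<in> J_in g M u \<xi> z \<union> J_out g M u \<xi> z" for j
    using that by (auto simp: J_in_def J_out_def)
  show ?thesis
  proof (rule has_derivative_sample_term_affine_rays
      [where a="\<lambda>j w. g j w ?y" and b="\<lambda>j w. g j w (?y + ?L) - g j w ?y"])
    show "g j w (?y + r *\<^sub>R ?L) = g j w ?y + r * (g j w (?y + ?L) - g j w ?y)"
      if "j \<in> J_in g M u \<xi> z \<union> J_out g M u \<xi> z" "w \<in> U" for j w r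
      using J[OF that(1)] that(2) by (intro affine_fun_on_line affine)
    show "((\<lambda>w. g j w ?y + r * (g j w (?y + ?L) - g j w ?y))
        has_derivative (\<lambda>h. gu j u (?y + r *\<^sub>R ?L) \<bullet> h)) (at u)"
      if "j \<in> J_in g M u \<xi> z \<union> J_out g M u \<xi> z" for j r
      using J[OF that] has_derivative_affine_ray_param[OF \<open>open U\<close> \<open>u \<in> U\<close> deriv affine] by blast
    show "gz j u (?y + r *\<^sub>R ?L) \<bullet> ?L = g j u (?y + ?L) - g j u ?y"
      if "j \<in> J_in g M u \<xi> z \<union> J_out g M u \<xi> z" for j r
      using J[OF that] inner_gradient_affine_ray[OF deriv affine] \<open>u \<in> U\<close> by blast
  qed fact+
qed

theorem proposition3p3:
  fixes \<phi> :: "nat \<Rightarrow> 'h::{real_inner,complete_space}"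
    and K M N :: nat
    and U :: "'p::{real_inner,complete_space} set"
    and \<xi> :: 'h
    and g :: "nat \<Rightarrow> 'p \<Rightarrow> 'h \<Rightarrow> real"
    and gu :: "nat \<Rightarrow> 'p \<Rightarrow> 'h \<Rightarrow> 'p"
    and gz :: "nat \<Rightarrow> 'p \<Rightarrow> 'h \<Rightarrow> 'h"
    and u :: 'p
    and v :: "nat \<Rightarrow> nat \<Rightarrow> real"
    and z :: "nat \<Rightarrow> 'h"
  assumes sep: "separable_space (euclidean :: 'h topology)"
    and orthonormal: "\<And>k l. k \<ge> 1 \<Longrightarrow> l \<ge> 1 \<Longrightarrow> \<phi> k \<bullet> \<phi> l = (if k = l then 1 else 0)"
    and K: "K \<ge> 1"
    and M: "M \<ge> 1"
    and N: "N \<ge> 1"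
    and U: "open U"
    and C1_deriv: "\<And>j w y. j \<in> {1..M} \<Longrightarrow> w \<in> U \<Longrightarrow>
        ((\<lambda>(w', y'). g j w' y') has_derivative (\<lambda>(dw, dy). gu j w y \<bullet> dw + gz j w y \<bullet> dy)) (at (w, y))"
    and C1_cont_u: "\<And>j. j \<in> {1..M} \<Longrightarrow> continuous_on (U \<times> UNIV) (\<lambda>(w, y). gu j w y)"
    and C1_cont_z: "\<And>j. j \<in> {1..M} \<Longrightarrow> continuous_on (U \<times> UNIV) (\<lambda>(w, y). gz j w y)"
    and affine: "\<And>j w y y' t. j \<in> {1..M} \<Longrightarrow> w \<in> U \<Longrightarrow>
        g j w (t *\<^sub>R y + (1 - t) *\<^sub>R y') = t * g j w y + (1 - t) * g j w y'"
    and u: "u \<in> U"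
    and strict_feas: "\<And>j. j \<in> {1..M} \<Longrightarrow> g j u \<xi> < 0"
    and sphere: "\<And>i. i \<in> {1..N} \<Longrightarrow> on_sphere K (v i)"
    and A1: "\<And>i. i \<in> {1..N} \<Longrightarrow> J_in g M u \<xi> (z i) \<union> J_out g M u \<xi> (z i) = {1..M}"
    and A2: "\<And>i. i \<in> {1..N} \<Longrightarrow>
        (rho_in_t g M u \<xi> \<phi> K u (v i) (z i) \<noteq> \<infinity> \<or> rho_out_t g M u \<xi> \<phi> K u (v i) (z i) \<noteq> \<infinity>) \<Longrightarrow>
        rho_in_t g M u \<xi> \<phi> K u (v i) (z i) \<noteq> rho_out_t g M u \<xi> \<phi> K u (v i) (z i)"
    and A3_in: "\<And>i. i \<in> {1..N} \<Longrightarrow>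
        0 < rho_in_t g M u \<xi> \<phi> K u (v i) (z i) \<Longrightarrow> rho_in_t g M u \<xi> \<phi> K u (v i) (z i) < \<infinity> \<Longrightarrow>
        \<exists>!j. j \<in> J_out g M u \<xi> (z i) \<and>
              rho_in (g j) \<xi> \<phi> K u (v i) (z i) = rho_in_t g M u \<xi> \<phi> K u (v i) (z i)"
    and A3_out: "\<And>i. i \<in> {1..N} \<Longrightarrow> rho_out_t g M u \<xi> \<phi> K u (v i) (z i) < \<infinity> \<Longrightarrow>
        \<exists>!j. j \<in> J_in g M u \<xi> (z i) \<and>
              rho_out (g j) \<xi> \<phi> K u (v i) (z i) = rho_out_t g M u \<xi> \<phi> K u (v i) (z i)"
  defines "\<phi>N \<equiv> (\<lambda>w. (1 / real N) * (\<Sum>i=1..N.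
              max 0 (chi_cdf_e K (rho_out_t g M u \<xi> \<phi> K w (v i) (z i))
                     - chi_cdf_e K (rho_in_t g M u \<xi> \<phi> K w (v i) (z i)))))"
    and "G \<equiv> (1 / real N) *\<^sub>R (\<Sum>i=1..N.
          (let rin = rho_in_t g M u \<xi> \<phi> K u (v i) (z i);
               rout = rho_out_t g M u \<xi> \<phi> K u (v i) (z i);
               j1 = (THE j. j \<in> J_out g M u \<xi> (z i) \<and> rho_in (g j) \<xi> \<phi> K u (v i) (z i) = rin);
               j2 = (THE j. j \<in> J_in g M u \<xi> (z i) \<and> rho_out (g j) \<xi> \<phi> K u (v i) (z i) = rout);
               Lv = LK \<phi> K (v i);
               yin = \<xi> + z i + real_of_ereal rin *\<^sub>R Lv;
               yout = \<xi> + z i + real_of_ereal rout *\<^sub>R Lv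
           in (if rout > rin then
                 (if rout = \<infinity> then 0 else
                    (- chi_pdf_e K rout / (gz j2 u yout \<bullet> Lv)) *\<^sub>R gu j2 u yout)
               + (if 0 < rin \<and> rin < \<infinity> then
                    (chi_pdf_e K rin / (gz j1 u yin \<bullet> Lv)) *\<^sub>R gu j1 u yin
                  else 0)
               else 0)))"
  shows "\<phi>N differentiable (at u) \<and> (\<phi>N has_derivative (\<lambda>h. G \<bullet> h)) (at u)"
proof -
  have "((\<lambda>w. max 0 (chi_cdf_e K (rho_out_t g M u \<xi> \<phi> K w (v i) (z i))
      - chi_cdf_e K (rho_in_t g M u \<xi> \<phi> K w (v i) (z i)))) has_derivative
      (\<lambda>h. sample_gradient g gu gz M u \<xi> \<phi> K (v i) (z i) \<bullet> h)) (at u)" if "i \<in> {1..N}" for i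
    using K U u C1_deriv[OF _ u] affine A2[OF that] A3_in[OF that] A3_out[OF that]
    by (rule has_derivative_sample_term)
  then have "(\<phi>N has_derivative
      (\<lambda>h. 1 / real N * (\<Sum>i=1..N. sample_gradient g gu gz M u \<xi> \<phi> K (v i) (z i) \<bullet> h))) (at u)"
    unfolding \<phi>N_def by (intro has_derivative_mult_right has_derivative_sum)
  moreover have "G = (1 / real N) *\<^sub>R (\<Sum>i=1..N. sample_gradient g gu gz M u \<xi> \<phi> K (v i) (z i))"
    by (simp add: G_def sample_gradient_def window_gradient_def Let_def)
  ultimately have "(\<phi>N has_derivative (\<lambda>h. G \<bullet> h)) (at u)"
    by (simp add: inner_sum_left)
  then show ?thesis
    by (auto intro: differentiableI)
qed

end
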